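(* Let $\Lambda=k(\Gamma,\mathcal{A})$ be a generalized path algebra without relations. Let $i\in\Gamma_0$, $1\le j\le s_i$, and let $((M_l)_{l\in\Gamma_0},(\phi_\alpha)_{\alpha\in\Gamma_1})$ be the representation of the indecomposable injective $I(i,j)=D(\Lambda\overline{e_{ij}})$. Then: - $M_i=I_i^j=D(A_ie_{ij})$; - for $l\ne i$, $M_l\cong(D A_l)^{n_l}$ as $A_l$-modules, where $$n_l=\sum_{\gamma:\,l=i_0\to i_1\to\cdots\to i_r=i}(\dim_kA_{i_1})\cdots(\dim_kA_{i_{r-1}})(\dim_kI_i^j),$$ summed over all paths $\gamma$ from $l$ to $i$ in $\Gamma$. In particular $M_l=0$ if there is no path from $l$ to $i$.
   Context: $k$ is an algebraically closed field, $\Gamma$ a finite acyclic quiver, and $\mathcal{A}=\{A_i:i\in\Gamma_0\}$ finite-dimensional basic $k$-algebras. The generalized path algebra $k(\Gamma,\mathcal{A})$ is spanned by $\mathcal{A}$-paths $a_1\beta_1\cdots a_n\beta_na_{n+1}$ ($\beta_1\cdots\beta_n$ a path of $\Gamma$, $a_i\in A_{s(\beta_i)}$, $a_{n+1}\in A_{e(\beta_n)}$), modulo multilinearity, with concatenation product (multiplying adjacent algebra entries, or $0$ if paths don't compose). For each $i$, $\{e_{i1},\dots,e_{is_i}\}$ is a complete set of primitive pairwise orthogonal idempotents of $A_i$, and $\overline{e_{ij}}$ is the class of $e_{ij}$ in $\Lambda$. $D=\operatorname{Hom}_k(-,k)$. The representation of a right $\Lambda$-module $X$ has $X_l=X\cdot1_l$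 ($1_l$ the identity of $A_l$) and $\phi_\alpha(x)=x\alpha$. *)

theory Defs
  imports "HOL-Library.Function_Algebras" "HOL-Computational_Algebra.Polynomial"
begin

definition alg_closed :: "'k::field itself \<Rightarrow> bool" where
  "alg_closed _ \<longleftrightarrow> (\<forall>p::'k poly. degree p \<ge> 1 \<longrightarrow> (\<exists>x. poly p x = 0))"

text \<open>A k-algebra of dimension n is k^n (functions nat => k vanishing from n on),
  with a bilinear associative unital multiplication.\<close>

definition vecs :: "nat \<Rightarrow> (nat \<Rightarrow> 'k::zero) set" where
  "vecs n = {x. \<forall>m\<ge>n. x m = 0}"

definition sc :: "'k::times \<Rightarrow> ('x \<Rightarrow> 'k) \<Rightarrow> ('x \<Rightarrow> 'k)" where
  "sc c x = (\<lambda>w. c * x w)"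

definition delta :: "nat \<Rightarrow> nat \<Rightarrow> 'k::{zero,one}" where
  "delta n = (\<lambda>m. if m = n then 1 else 0)"

definition fd_alg :: "nat \<Rightarrow> ((nat \<Rightarrow> 'k::field) \<Rightarrow> (nat \<Rightarrow> 'k) \<Rightarrow> (nat \<Rightarrow> 'k)) \<Rightarrow> (nat \<Rightarrow> 'k) \<Rightarrow> bool" where
  "fd_alg n mul one \<longleftrightarrow> one \<in> vecs n \<and>
     (\<forall>a\<in>vecs n. \<forall>b\<in>vecs n. mul a b \<in> vecs n) \<and>
     (\<forall>a\<in>vecs n. \<forall>b\<in>vecs n. \<forall>c\<in>vecs n.
        mul (a + b) c = mul a c + mul b c \<and> mul a (b + c) = mul a b + mul a c \<and>
        mul (mul a b) c = mul a (mul b c)) \<and>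
     (\<forall>k. \<forall>a\<in>vecs n. \<forall>b\<in>vecs n. mul (sc k a) b = sc k (mul a b) \<and> mul a (sc k b) = sc k (mul a b)) \<and>
     (\<forall>a\<in>vecs n. mul one a = a \<and> mul a one = a)"

definition idem :: "nat \<Rightarrow> ((nat \<Rightarrow> 'k::field) \<Rightarrow> (nat \<Rightarrow> 'k) \<Rightarrow> (nat \<Rightarrow> 'k)) \<Rightarrow> (nat \<Rightarrow> 'k) \<Rightarrow> bool" where
  "idem n mul e \<longleftrightarrow> e \<in> vecs n \<and> mul e e = e"

definition prim_idem :: "nat \<Rightarrow> ((nat \<Rightarrow> 'k::field) \<Rightarrow> (nat \<Rightarrow> 'k) \<Rightarrow> (nat \<Rightarrow> 'k)) \<Rightarrow> (nat \<Rightarrow> 'k) \<Rightarrow> bool" where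
  "prim_idem n mul e \<longleftrightarrow> idem n mul e \<and> e \<noteq> 0 \<and>
     \<not> (\<exists>e1 e2. idem n mul e1 \<and> idem n mul e2 \<and> e1 \<noteq> 0 \<and> e2 \<noteq> 0 \<and>
           mul e1 e2 = 0 \<and> mul e2 e1 = 0 \<and> e = e1 + e2)"

definition complete_prim_orth ::
  "nat \<Rightarrow> ((nat \<Rightarrow> 'k::field) \<Rightarrow> (nat \<Rightarrow> 'k) \<Rightarrow> (nat \<Rightarrow> 'k)) \<Rightarrow> (nat \<Rightarrow> 'k) \<Rightarrow> nat \<Rightarrow> (nat \<Rightarrow> nat \<Rightarrow> 'k) \<Rightarrow> bool" where
  "complete_prim_orth n mul one s e \<longleftrightarrow>
     (\<forall>j\<in>{1..s}. prim_idem n mul (e j)) \<and>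
     (\<forall>j\<in>{1..s}. \<forall>j'\<in>{1..s}. j \<noteq> j' \<longrightarrow> mul (e j) (e j') = 0) \<and>
     (\<Sum>j=1..s. e j) = one"

definition rmod_iso ::
  "'a set \<Rightarrow> 'm::plus set \<Rightarrow> ('m \<Rightarrow> 'a \<Rightarrow> 'm) \<Rightarrow> ('k \<Rightarrow> 'm \<Rightarrow> 'm)
     \<Rightarrow> 'n::plus set \<Rightarrow> ('n \<Rightarrow> 'a \<Rightarrow> 'n) \<Rightarrow> ('k \<Rightarrow> 'n \<Rightarrow> 'n) \<Rightarrow> bool" where
  "rmod_iso A M actM smM N actN smN \<longleftrightarrow>
     (\<exists>F. bij_betw F M N \<and>
          (\<forall>x\<in>M. \<forall>y\<in>M. F (x + y) = F x + F y) \<and>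
          (\<forall>c. \<forall>x\<in>M. F (smM c x) = smN c (F x)) \<and>
          (\<forall>x\<in>M. \<forall>a\<in>A. F (actM x a) = actN (F x) a))"

definition basic_alg ::
  "nat \<Rightarrow> ((nat \<Rightarrow> 'k::field) \<Rightarrow> (nat \<Rightarrow> 'k) \<Rightarrow> (nat \<Rightarrow> 'k)) \<Rightarrow> nat \<Rightarrow> (nat \<Rightarrow> nat \<Rightarrow> 'k) \<Rightarrow> bool" where
  "basic_alg n mul s e \<longleftrightarrow>
     (\<forall>j\<in>{1..s}. \<forall>j'\<in>{1..s}. j \<noteq> j' \<longrightarrow>
        \<not> rmod_iso (vecs n) ((\<lambda>a. mul (e j) a) ` vecs n) mul sc
                            ((\<lambda>a. mul (e j') a) ` vecs n) mul sc)"

definition dual :: "('x \<Rightarrow> 'k::field) set \<Rightarrow> (('x \<Rightarrow> 'k) \<Rightarrow> 'k) set" where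
  "dual S = {\<phi>. (\<forall>x\<in>S. \<forall>y\<in>S. \<phi> (x + y) = \<phi> x + \<phi> y) \<and>
               (\<forall>c. \<forall>x\<in>S. \<phi> (sc c x) = c * \<phi> x) \<and> (\<forall>x. x \<notin> S \<longrightarrow> \<phi> x = 0)}"

definition dact :: "('x \<Rightarrow> 'k::field) set \<Rightarrow> ('a \<Rightarrow> ('x \<Rightarrow> 'k) \<Rightarrow> ('x \<Rightarrow> 'k))
                    \<Rightarrow> (('x \<Rightarrow> 'k) \<Rightarrow> 'k) \<Rightarrow> 'a \<Rightarrow> (('x \<Rightarrow> 'k) \<Rightarrow> 'k)" where
  "dact S L \<phi> a = (\<lambda>x. if x \<in> S then \<phi> (L a x) else 0)"

definition kspan :: "('x \<Rightarrow> 'k::field) list \<Rightarrow> ('x \<Rightarrow> 'k) set" where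
  "kspan vs = {(\<Sum>m<length vs. sc (c m) (vs ! m)) | c. True}"

definition dimk :: "('x \<Rightarrow> 'k::field) set \<Rightarrow> nat" where
  "dimk S = (LEAST n. \<exists>vs. length vs = n \<and> set vs \<subseteq> S \<and> kspan vs = S)"

text \<open>\<open>(D A)^N\<close> for the algebra \<open>A = k^n\<close>: N-tuples of functionals, with componentwise action.\<close>
definition dpow :: "nat \<Rightarrow> nat \<Rightarrow> (nat \<Rightarrow> (nat \<Rightarrow> 'k::field) \<Rightarrow> 'k) set" where
  "dpow n N = {\<Phi>. (\<forall>m<N. \<Phi> m \<in> dual (vecs n)) \<and> (\<forall>m\<ge>N. \<Phi> m = 0)}"

definition dpow_act :: "nat \<Rightarrow> nat \<Rightarrow> ((nat \<Rightarrow> 'k::field) \<Rightarrow> (nat \<Rightarrow> 'k) \<Rightarrow> (nat \<Rightarrow> 'k))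
     \<Rightarrow> (nat \<Rightarrow> (nat \<Rightarrow> 'k) \<Rightarrow> 'k) \<Rightarrow> (nat \<Rightarrow> 'k) \<Rightarrow> (nat \<Rightarrow> (nat \<Rightarrow> 'k) \<Rightarrow> 'k)" where
  "dpow_act n N mul \<Phi> a = (\<lambda>m. if m < N then dact (vecs n) mul (\<Phi> m) a else 0)"

definition dpow_sc :: "'k::field \<Rightarrow> (nat \<Rightarrow> (nat \<Rightarrow> 'k) \<Rightarrow> 'k) \<Rightarrow> (nat \<Rightarrow> (nat \<Rightarrow> 'k) \<Rightarrow> 'k)" where
  "dpow_sc c \<Phi> = (\<lambda>m. sc c (\<Phi> m))"

text \<open>A path from \<open>v\<close> is a list of composable arrows starting at \<open>v\<close> ([] = trivial path at v).\<close>

definition qpath :: "nat set \<Rightarrow> nat set \<Rightarrow> (nat \<Rightarrow> nat) \<Rightarrow> (nat \<Rightarrow> nat) \<Rightarrow> nat \<Rightarrow> nat list \<Rightarrow> bool" where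
  "qpath V E src tgt v as \<longleftrightarrow> v \<in> V \<and> set as \<subseteq> E \<and> (as \<noteq> [] \<longrightarrow> src (hd as) = v) \<and>
     (\<forall>m. Suc m < length as \<longrightarrow> tgt (as ! m) = src (as ! Suc m))"

definition pvert :: "(nat \<Rightarrow> nat) \<Rightarrow> nat \<Rightarrow> nat list \<Rightarrow> nat \<Rightarrow> nat" where
  "pvert tgt v as m = (if m = 0 then v else tgt (as ! (m - 1)))"

definition pend :: "(nat \<Rightarrow> nat) \<Rightarrow> nat \<Rightarrow> nat list \<Rightarrow> nat" where
  "pend tgt v as = pvert tgt v as (length as)"

definition quiver :: "nat set \<Rightarrow> nat set \<Rightarrow> (nat \<Rightarrow> nat) \<Rightarrow> (nat \<Rightarrow> nat) \<Rightarrow> bool" where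
  "quiver V E src tgt \<longleftrightarrow> finite V \<and> finite E \<and> (\<forall>\<alpha>\<in>E. src \<alpha> \<in> V \<and> tgt \<alpha> \<in> V)"

definition acyclic_quiver :: "nat set \<Rightarrow> nat set \<Rightarrow> (nat \<Rightarrow> nat) \<Rightarrow> (nat \<Rightarrow> nat) \<Rightarrow> bool" where
  "acyclic_quiver V E src tgt \<longleftrightarrow> (\<forall>v as. qpath V E src tgt v as \<and> as \<noteq> [] \<longrightarrow> pend tgt v as \<noteq> v)"

text \<open>Each \<open>A_v\<close> is \<open>k^(d v)\<close> with multiplication \<open>mul v\<close>. The space spanned by
  \<open>A\<close>-paths modulo multilinearity is the direct sum over paths \<open>v_0 -> ... -> v_n\<close> of
  \<open>A_{v_0} \<otimes> ... \<otimes> A_{v_n}\<close>; a basis is given by words \<open>(v, as, is)\<close>: a path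
  \<open>as\<close> from \<open>v\<close> together with basis indices \<open>is ! m < d (m-th vertex)\<close>.\<close>

definition gwords :: "nat set \<Rightarrow> nat set \<Rightarrow> (nat \<Rightarrow> nat) \<Rightarrow> (nat \<Rightarrow> nat) \<Rightarrow> (nat \<Rightarrow> nat)
    \<Rightarrow> (nat \<times> nat list \<times> nat list) set" where
  "gwords V E src tgt d = {(v, as, is). qpath V E src tgt v as \<and> length is = Suc (length as) \<and>
       (\<forall>m < length is. is ! m < d (pvert tgt v as m))}"

text \<open>Elements of \<open>\<Lambda>\<close>: coefficient functions supported on basis words.\<close>
definition gpa :: "nat set \<Rightarrow> nat set \<Rightarrow> (nat \<Rightarrow> nat) \<Rightarrow> (nat \<Rightarrow> nat) \<Rightarrow> (nat \<Rightarrow> nat)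
    \<Rightarrow> ((nat \<times> nat list \<times> nat list) \<Rightarrow> 'k::zero) set" where
  "gpa V E src tgt d = {f. \<forall>w. w \<notin> gwords V E src tgt d \<longrightarrow> f w = 0}"

text \<open>Coefficient of basis word \<open>w\<close> in the product of basis words \<open>u\<close> and \<open>u'\<close>
  (concatenate, multiplying the adjacent entries in \<open>A_{end u}\<close>; 0 if not composable).\<close>
definition bcoef :: "(nat \<Rightarrow> nat) \<Rightarrow> (nat \<Rightarrow> (nat \<Rightarrow> 'k::field) \<Rightarrow> (nat \<Rightarrow> 'k) \<Rightarrow> (nat \<Rightarrow> 'k))
    \<Rightarrow> (nat \<times> nat list \<times> nat list) \<Rightarrow> (nat \<times> nat list \<times> nat list) \<Rightarrow> (nat \<times> nat list \<times> nat list) \<Rightarrow> 'k" where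
  "bcoef tgt mul u u' w = (case u of (v, as, is) \<Rightarrow> case u' of (v', as', is') \<Rightarrow> case w of (v'', bs, js) \<Rightarrow>
      if pend tgt v as = v' \<and> v'' = v \<and> bs = as @ as' \<and> length js = length is + length is' - 1 \<and>
         take (length as) js = take (length as) is \<and> drop (Suc (length as)) js = tl is'
      then mul v' (delta (last is)) (delta (hd is')) (js ! length as) else 0)"

definition gpa_mult :: "nat set \<Rightarrow> nat set \<Rightarrow> (nat \<Rightarrow> nat) \<Rightarrow> (nat \<Rightarrow> nat) \<Rightarrow> (nat \<Rightarrow> nat)
    \<Rightarrow> (nat \<Rightarrow> (nat \<Rightarrow> 'k::field) \<Rightarrow> (nat \<Rightarrow> 'k) \<Rightarrow> (nat \<Rightarrow> 'k))
    \<Rightarrow> ((nat \<times> nat list \<times> nat list) \<Rightarrow> 'k) \<Rightarrow> ((nat \<times> nat list \<times> nat list) \<Rightarrow> 'k)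
    \<Rightarrow> ((nat \<times> nat list \<times> nat list) \<Rightarrow> 'k)" where
  "gpa_mult V E src tgt d mul f g = (\<lambda>w. if w \<in> gwords V E src tgt d then
      (\<Sum>u\<in>gwords V E src tgt d. \<Sum>u'\<in>gwords V E src tgt d. f u * g u' * bcoef tgt mul u u' w)
      else 0)"

text \<open>The class in \<open>\<Lambda>\<close> of an element \<open>a \<in> A_v\<close> (trivial \<open>A\<close>-path at \<open>v\<close>).\<close>
definition gincl :: "(nat \<Rightarrow> nat) \<Rightarrow> nat \<Rightarrow> (nat \<Rightarrow> 'k::zero) \<Rightarrow> ((nat \<times> nat list \<times> nat list) \<Rightarrow> 'k)" where
  "gincl d v a = (\<lambda>(v', as, is). if v' = v \<and> as = [] \<and> length is = 1 \<and> hd is < d v then a (hd is) else 0)"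

definition gpa_proj :: "nat set \<Rightarrow> nat set \<Rightarrow> (nat \<Rightarrow> nat) \<Rightarrow> (nat \<Rightarrow> nat) \<Rightarrow> (nat \<Rightarrow> nat)
    \<Rightarrow> (nat \<Rightarrow> (nat \<Rightarrow> 'k::field) \<Rightarrow> (nat \<Rightarrow> 'k) \<Rightarrow> (nat \<Rightarrow> 'k)) \<Rightarrow> nat \<Rightarrow> (nat \<Rightarrow> 'k)
    \<Rightarrow> ((nat \<times> nat list \<times> nat list) \<Rightarrow> 'k) set" where
  "gpa_proj V E src tgt d mul i e =
     (\<lambda>f. gpa_mult V E src tgt d mul f (gincl d i e)) ` gpa V E src tgt d"

text \<open>Right \<open>\<Lambda>\<close>-action on \<open>I = D(\<Lambda> e)\<close>.\<close>
definition inj_act where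
  "inj_act V E src tgt d mul i e = dact (gpa_proj V E src tgt d mul i e) (gpa_mult V E src tgt d mul)"

text \<open>\<open>M_l = I \<cdot> 1_l\<close>.\<close>
definition rep_space where
  "rep_space V E src tgt d mul one i e l =
     (\<lambda>\<phi>. inj_act V E src tgt d mul i e \<phi> (gincl d l (one l))) ` dual (gpa_proj V E src tgt d mul i e)"

definition rep_act where
  "rep_act V E src tgt d mul i e l = (\<lambda>x a. inj_act V E src tgt d mul i e x (gincl d l a))"

definition left_ideal :: "nat \<Rightarrow> ((nat \<Rightarrow> 'k::field) \<Rightarrow> (nat \<Rightarrow> 'k) \<Rightarrow> (nat \<Rightarrow> 'k)) \<Rightarrow> (nat \<Rightarrow> 'k) \<Rightarrow> (nat \<Rightarrow> 'k) set" where
  "left_ideal n mul e = (\<lambda>a. mul a e) ` vecs n"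

text \<open>The \<open>(m+1)\<close>-th vertex is \<open>tgt (as ! m)\<close>.\<close>
definition nmult :: "nat set \<Rightarrow> nat set \<Rightarrow> (nat \<Rightarrow> nat) \<Rightarrow> (nat \<Rightarrow> nat) \<Rightarrow> (nat \<Rightarrow> nat) \<Rightarrow> nat \<Rightarrow> nat \<Rightarrow> nat \<Rightarrow> nat" where
  "nmult V E src tgt d dimI l i =
     (\<Sum>as\<in>{as. qpath V E src tgt l as \<and> as \<noteq> [] \<and> pend tgt l as = i}.
        (\<Prod>m<length as - 1. d (tgt (as ! m))) * dimI)"

end

theory Submission
  imports Defs
begin

text \<open>Write \<open>e = e_ij\<close>. The space \<open>M_l = I(i,j) \<cdot> 1_l\<close> consists of the functionals on \<open>\<Lambda> e\<close>
  that factor through left multiplication by \<open>1_l\<close>, so \<open>M_l \<cong> D(1_l \<Lambda> e)\<close> as right \<open>A_l\<close>-modules.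
  Without relations, \<open>1_l \<Lambda> e\<close> is spanned by the \<open>\<A>\<close>-paths from \<open>l\<close> to \<open>i\<close> ending in \<open>A_i e\<close>, so it
  is the direct sum over the paths \<open>l = i_0 \<rightarrow> \<dots> \<rightarrow> i_r = i\<close> of
  \<open>A_l \<otimes> A_{i_1} \<otimes> \<dots> \<otimes> A_{i_{r-1}} \<otimes> A_i e\<close>, i.e.\ of \<open>n_l\<close> copies of the left module \<open>A_l\<close>;
  dualising gives \<open>(D A_l)^{n_l}\<close>. For \<open>l = i\<close> acyclicity leaves only the trivial path, so
  \<open>1_i \<Lambda> e = A_i e\<close>. Both cases are instances of one lemma: if a projection \<open>P\<close> of \<open>X\<close> splits
  through \<open>N\<close> copies of \<open>Y\<close>, the functionals on \<open>X\<close> factoring through \<open>P\<close> form \<open>(D Y)^N\<close>.\<close>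

section \<open>Linear algebra in function spaces\<close>

lemma vector_space_sc: "vector_space (sc :: 'k::field \<Rightarrow> ('x \<Rightarrow> 'k) \<Rightarrow> ('x \<Rightarrow> 'k))"
  by unfold_locales (auto simp: sc_def fun_eq_iff algebra_simps)

interpretation fv: vector_space "sc :: 'k::field \<Rightarrow> ('x \<Rightarrow> 'k) \<Rightarrow> ('x \<Rightarrow> 'k)"
  by (rule vector_space_sc)

lemma sum_fun_apply: "(sum f A) x = (\<Sum>a\<in>A. f a x)"
  by (induction A rule: infinite_finite_induct) auto

lemma sc_apply [simp]: "sc c f x = c * f x"
  by (simp add: sc_def)

lemma subspace_closedD:
  "fv.subspace S \<Longrightarrow> x \<in> S \<Longrightarrow> y \<in> S \<Longrightarrow> x + y \<in> S"
  "fv.subspace S \<Longrightarrow> x \<in> S \<Longrightarrow> sc c x \<in> S"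
  by (simp_all add: fv.subspace_def)

lemma kspan_eq_span: "kspan vs = fv.span (set vs)"
proof
  show "kspan vs \<subseteq> fv.span (set vs)"
    unfolding kspan_def by (blast intro: fv.span_sum fv.span_scale fv.span_base nth_mem)
next
  have kspanI: "(\<Sum>m<length vs. sc (c m) (vs ! m)) \<in> kspan vs" for c
    unfolding kspan_def by blast
  have "fv.subspace (kspan vs)"
  proof (rule fv.subspaceI)
    show "0 \<in> kspan vs"
      using kspanI[of "\<lambda>_. 0"] by (simp only: fv.scale_zero_left sum.neutral_const)
    fix x y assume "x \<in> kspan vs" "y \<in> kspan vs"
    then obtain c c' where "x = (\<Sum>m<length vs. sc (c m) (vs ! m))" "y = (\<Sum>m<length vs. sc (c' m) (vs ! m))"
      unfolding kspan_def by auto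
    then have "x + y = (\<Sum>m<length vs. sc (c m + c' m) (vs ! m))"
      by (simp add: sum.distrib fv.scale_left_distrib)
    then show "x + y \<in> kspan vs" using kspanI by simp
  next
    fix a x assume "x \<in> kspan vs"
    then obtain c where "x = (\<Sum>m<length vs. sc (c m) (vs ! m))"
      unfolding kspan_def by auto
    then have "sc a x = (\<Sum>m<length vs. sc (a * c m) (vs ! m))"
      by (simp add: fv.scale_sum_right)
    then show "sc a x \<in> kspan vs" using kspanI by simp
  qed
  moreover have "set vs \<subseteq> kspan vs"
  proof
    fix v assume "v \<in> set vs"
    then obtain k where k: "k < length vs" "vs ! k = v" by (auto simp: in_set_conv_nth)
    have "(\<Sum>m<length vs. sc (if m = k then 1 else 0) (vs ! m)) = v"
      using k by (simp add: if_distrib[of "\<lambda>c. sc c _"] sum.delta cong: if_cong)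
    then show "v \<in> kspan vs" using kspanI by metis
  qed
  ultimately show "fv.span (set vs) \<subseteq> kspan vs" by (rule fv.span_minimal[rotated])
qed

lemma dimk_eq_card_basis:
  fixes S :: "('x \<Rightarrow> 'k::field) set"
  assumes fin: "finite B" and ind: "fv.independent B" and span: "fv.span B = S"
  shows "dimk S = card B"
  unfolding dimk_def
proof (rule Least_equality)
  obtain vs where vs: "set vs = B" "distinct vs" using finite_distinct_list[OF fin] by blast
  show "\<exists>vs. length vs = card B \<and> set vs \<subseteq> S \<and> kspan vs = S"
    using vs span fv.span_superset[of B] by (auto simp: kspan_eq_span distinct_card intro!: exI[of _ vs])
next
  fix n assume "\<exists>vs. length vs = n \<and> set vs \<subseteq> S \<and> kspan vs = S"
  then obtain vs where vs: "length vs = n" "kspan vs = S" by auto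
  have "B \<subseteq> fv.span (set vs)" using vs span fv.span_superset[of B] by (auto simp: kspan_eq_span)
  then have "card B \<le> card (set vs)" using fv.independent_span_bound[OF _ ind] by auto
  also have "\<dots> \<le> n" using card_length vs by auto
  finally show "card B \<le> n" .
qed

lemma additive_on_zero:
  fixes f :: "('x \<Rightarrow> 'k::field) \<Rightarrow> 'b::ab_group_add"
  assumes "fv.subspace S" and "\<And>x y. x \<in> S \<Longrightarrow> y \<in> S \<Longrightarrow> f (x + y) = f x + f y"
  shows "f 0 = 0"
proof -
  have "f (0 + 0) = f 0 + f 0" using assms fv.subspace_0 by blast
  then show ?thesis by simp
qed

lemma additive_on_sum:
  fixes f :: "('x \<Rightarrow> 'k::field) \<Rightarrow> 'b::ab_group_add"
  assumes S: "fv.subspace S" and add: "\<And>x y. x \<in> S \<Longrightarrow> y \<in> S \<Longrightarrow> f (x + y) = f x + f y"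
    and g: "\<And>a. a \<in> A \<Longrightarrow> g a \<in> S"
  shows "f (sum g A) = (\<Sum>a\<in>A. f (g a))"
  using g
proof (induction A rule: infinite_finite_induct)
  case (insert a A)
  then have "sum g A \<in> S" using S by (blast intro: fv.subspace_sum)
  then have "f (g a + sum g A) = f (g a) + f (sum g A)" using insert add by blast
  moreover have "f (sum g A) = (\<Sum>a\<in>A. f (g a))" using insert by blast
  ultimately show ?case by (simp only: sum.insert[OF insert(1,2)])
qed (simp_all add: additive_on_zero[OF S add])

lemma dualI:
  assumes "\<And>x y. x \<in> S \<Longrightarrow> y \<in> S \<Longrightarrow> \<phi> (x + y) = \<phi> x + \<phi> y"
    and "\<And>c x. x \<in> S \<Longrightarrow> \<phi> (sc c x) = c * \<phi> x"
    and "\<And>x. x \<notin> S \<Longrightarrow> \<phi> x = 0"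
  shows "\<phi> \<in> dual S"
  using assms by (auto simp: dual_def)

lemma dualD:
  assumes "\<phi> \<in> dual S"
  shows "x \<in> S \<Longrightarrow> y \<in> S \<Longrightarrow> \<phi> (x + y) = \<phi> x + \<phi> y"
    and "x \<in> S \<Longrightarrow> \<phi> (sc c x) = c * \<phi> x"
    and "x \<notin> S \<Longrightarrow> \<phi> x = 0"
  using assms by (auto simp: dual_def)

lemma dual_subspace: "fv.subspace (dual S)"
proof (rule fv.subspaceI)
  fix x y assume "x \<in> dual S" "y \<in> dual S"
  then show "x + y \<in> dual S" by (simp add: dual_def algebra_simps)
next
  fix c x assume "x \<in> dual S"
  then show "sc c x \<in> dual S" by (simp add: dual_def distrib_left mult.left_commute)
qed (simp add: dual_def)

lemma dual_zero: "fv.subspace S \<Longrightarrow> \<phi> \<in> dual S \<Longrightarrow> \<phi> 0 = 0"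
  using additive_on_zero dualD(1) by metis

lemma dual_sum:
  "fv.subspace S \<Longrightarrow> \<phi> \<in> dual S \<Longrightarrow> (\<And>a. a \<in> A \<Longrightarrow> g a \<in> S) \<Longrightarrow> \<phi> (sum g A) = (\<Sum>a\<in>A. \<phi> (g a))"
  using additive_on_sum[of S \<phi> A g] dualD(1)[of \<phi> S] by blast

definition coord_fun :: "('x \<Rightarrow> 'k::field) set \<Rightarrow> ('x \<Rightarrow> 'k) set \<Rightarrow> ('x \<Rightarrow> 'k) \<Rightarrow> (('x \<Rightarrow> 'k) \<Rightarrow> 'k)" where
  "coord_fun S B b = (\<lambda>x. if x \<in> S then fv.representation B x b else 0)"

context
  fixes S B :: "('x \<Rightarrow> 'k::field) set"
  assumes subspace: "fv.subspace S" and fin: "finite B" and ind: "fv.independent B"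
    and span: "fv.span B = S"
begin

lemma basis_subset: "B \<subseteq> S"
  using span fv.span_superset by blast

lemma coord_fun_basis: "b \<in> B \<Longrightarrow> b' \<in> B \<Longrightarrow> coord_fun S B b b' = (if b' = b then 1 else 0)"
  using basis_subset fv.representation_basis[OF ind] by (auto simp: coord_fun_def)

lemma coord_fun_in_dual: "coord_fun S B b \<in> dual S"
proof (rule dualI)
  fix x y assume "x \<in> S" "y \<in> S"
  then show "coord_fun S B b (x + y) = coord_fun S B b x + coord_fun S B b y"
    using fv.representation_add[OF ind] span subspace_closedD[OF subspace] by (simp add: coord_fun_def)
next
  fix c x assume "x \<in> S"
  then show "coord_fun S B b (sc c x) = c * coord_fun S B b x"
    using fv.representation_scale[OF ind] span subspace_closedD[OF subspace] by (simp add: coord_fun_def)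
qed (simp add: coord_fun_def)

lemma inj_on_coord_fun: "inj_on (coord_fun S B) B"
proof (rule inj_onI)
  fix b b' assume "b \<in> B" "b' \<in> B" "coord_fun S B b = coord_fun S B b'"
  then have "coord_fun S B b b = coord_fun S B b' b" by simp
  then show "b = b'" using coord_fun_basis \<open>b \<in> B\<close> \<open>b' \<in> B\<close> by (auto split: if_splits)
qed

lemma independent_coord_funs: "fv.independent (coord_fun S B ` B)"
  apply (rule fv.independent_if_scalars_zero)
   apply (simp add: fin)
  subgoal premises prems for f \<psi>
  proof -
    from prems(2) obtain b0 where b0: "b0 \<in> B" "\<psi> = coord_fun S B b0" by blast
    have "0 = (\<Sum>x\<in>coord_fun S B ` B. sc (f x) x) b0" unfolding prems(1) by simp
    also have "\<dots> = (\<Sum>x\<in>coord_fun S B ` B. f x * x b0)"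
      by (simp only: sum_fun_apply sc_apply)
    also have "\<dots> = (\<Sum>b\<in>B. f (coord_fun S B b) * coord_fun S B b b0)"
      by (simp only: sum.reindex[OF inj_on_coord_fun] o_def)
    also have "\<dots> = (\<Sum>b\<in>B. if b = b0 then f (coord_fun S B b) else 0)"
      by (rule sum.cong) (simp_all add: coord_fun_basis b0)
    also have "\<dots> = f \<psi>" using b0 fin by simp
    finally show "f \<psi> = 0" by simp
  qed
  done

lemma dual_eq_sum_coord_funs:
  assumes \<phi>: "\<phi> \<in> dual S"
  shows "\<phi> = (\<Sum>b\<in>B. sc (\<phi> b) (coord_fun S B b))"
proof
  fix x
  show "\<phi> x = (\<Sum>b\<in>B. sc (\<phi> b) (coord_fun S B b)) x"
  proof (cases "x \<in> S")
    case True
    have "\<phi> x = \<phi> (\<Sum>b\<in>B. sc (fv.representation B x b) b)"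
      using fv.sum_representation_eq[OF ind, of x B] True span fin by simp
    also have "\<dots> = (\<Sum>b\<in>B. \<phi> (sc (fv.representation B x b) b))"
      using basis_subset subspace_closedD[OF subspace] by (intro dual_sum[OF subspace \<phi>]) blast
    also have "\<dots> = (\<Sum>b\<in>B. \<phi> b * fv.representation B x b)"
      using basis_subset by (intro sum.cong) (auto simp: dualD[OF \<phi>] mult.commute)
    finally show ?thesis using True by (simp add: sum_fun_apply coord_fun_def)
  qed (use \<phi> in \<open>simp add: sum_fun_apply coord_fun_def dualD\<close>)
qed

lemma span_coord_funs: "fv.span (coord_fun S B ` B) = dual S"
proof
  show "fv.span (coord_fun S B ` B) \<subseteq> dual S"
    by (rule fv.span_minimal) (use coord_fun_in_dual dual_subspace in auto)
  show "dual S \<subseteq> fv.span (coord_fun S B ` B)"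
  proof
    fix \<phi> assume "\<phi> \<in> dual S"
    then have "\<phi> = (\<Sum>b\<in>B. sc (\<phi> b) (coord_fun S B b))" by (rule dual_eq_sum_coord_funs)
    also have "\<dots> \<in> fv.span (coord_fun S B ` B)"
      by (intro fv.span_sum fv.span_scale fv.span_base) simp
    finally show "\<phi> \<in> fv.span (coord_fun S B ` B)" .
  qed
qed

lemma dimk_dual_eq_card: "dimk (dual S) = card B"
  using dimk_eq_card_basis[OF _ independent_coord_funs span_coord_funs] fin
  by (simp add: card_image[OF inj_on_coord_fun])

end

lemma vecs_subspace: "fv.subspace (vecs n)"
  by (rule fv.subspaceI) (auto simp: vecs_def)

lemma delta_in_vecs: "m < n \<Longrightarrow> delta m \<in> vecs n"
  by (auto simp: vecs_def delta_def)

lemma vecs_sc: "x \<in> vecs n \<Longrightarrow> sc c x \<in> vecs n" for x :: "nat \<Rightarrow> 'k::field"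
  by (simp add: vecs_def)

lemma vecs_eq_sum_delta:
  fixes x :: "nat \<Rightarrow> 'k::field"
  assumes "x \<in> vecs n"
  shows "x = (\<Sum>m<n. sc (x m) (delta m))"
proof
  fix r
  have "(\<Sum>m<n. sc (x m) (delta m)) r = (\<Sum>m<n. if m = r then x m else 0)"
    unfolding sum_fun_apply by (rule sum.cong) (auto simp: delta_def)
  then show "x r = (\<Sum>m<n. sc (x m) (delta m)) r"
    using assms by (simp add: vecs_def)
qed

lemma subspace_of_vecs_has_finite_basis:
  fixes S :: "(nat \<Rightarrow> 'k::field) set"
  assumes "fv.subspace S" "S \<subseteq> vecs n"
  obtains B where "finite B" "fv.independent B" "fv.span B = S"
proof -
  obtain B :: "(nat \<Rightarrow> 'k) set" where B: "B \<subseteq> S" "fv.independent B" "S \<subseteq> fv.span B"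
    by (rule fv.basis_exists)
  have "x \<in> fv.span (delta ` {..<n})" if "x \<in> vecs n" for x :: "nat \<Rightarrow> 'k"
  proof -
    have "(\<Sum>m<n. sc (x m) (delta m)) \<in> fv.span (delta ` {..<n})"
      by (intro fv.span_sum fv.span_scale fv.span_base) simp
    then show ?thesis using vecs_eq_sum_delta[OF that] by simp
  qed
  then have "finite B"
    using B assms(2) fv.independent_span_bound[OF _ B(2), of "delta ` {..<n}"] by blast
  with B that show ?thesis using fv.span_subspace[OF B(1) B(3) assms(1)] by blast
qed

lemma fd_alg_closed: "fd_alg n mul one \<Longrightarrow> a \<in> vecs n \<Longrightarrow> b \<in> vecs n \<Longrightarrow> mul a b \<in> vecs n"
  and fd_alg_add_left: "fd_alg n mul one \<Longrightarrow> x \<in> vecs n \<Longrightarrow> y \<in> vecs n \<Longrightarrow> z \<in> vecs n \<Longrightarrow>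
    mul (x + y) z = mul x z + mul y z"
  and fd_alg_add_right: "fd_alg n mul one \<Longrightarrow> x \<in> vecs n \<Longrightarrow> y \<in> vecs n \<Longrightarrow> z \<in> vecs n \<Longrightarrow>
    mul x (y + z) = mul x y + mul x z"
  and fd_alg_one: "fd_alg n mul one \<Longrightarrow> one \<in> vecs n"
  and fd_alg_one_left: "fd_alg n mul one \<Longrightarrow> a \<in> vecs n \<Longrightarrow> mul one a = a"
  and fd_alg_sc_left: "fd_alg n mul one \<Longrightarrow> a \<in> vecs n \<Longrightarrow> b \<in> vecs n \<Longrightarrow> mul (sc c a) b = sc c (mul a b)"
  and fd_alg_sc_right: "fd_alg n mul one \<Longrightarrow> a \<in> vecs n \<Longrightarrow> b \<in> vecs n \<Longrightarrow> mul a (sc c b) = sc c (mul a b)"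
  and fd_alg_assoc: "fd_alg n mul one \<Longrightarrow> x \<in> vecs n \<Longrightarrow> y \<in> vecs n \<Longrightarrow> z \<in> vecs n \<Longrightarrow>
    mul (mul x y) z = mul x (mul y z)"
  unfolding fd_alg_def by blast+

context
  fixes n and mul :: "(nat \<Rightarrow> 'k::field) \<Rightarrow> (nat \<Rightarrow> 'k) \<Rightarrow> (nat \<Rightarrow> 'k)" and one
  assumes fd: "fd_alg n mul one"
begin

lemma fd_alg_sum_left: "(\<And>p. p \<in> P \<Longrightarrow> f p \<in> vecs n) \<Longrightarrow> b \<in> vecs n \<Longrightarrow>
    mul (sum f P) b = (\<Sum>p\<in>P. mul (f p) b)"
  by (rule additive_on_sum[OF vecs_subspace]) (use fd_alg_add_left[OF fd] in blast)+

lemma fd_alg_sum_right: "(\<And>p. p \<in> P \<Longrightarrow> f p \<in> vecs n) \<Longrightarrow> a \<in> vecs n \<Longrightarrow>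
    mul a (sum f P) = (\<Sum>p\<in>P. mul a (f p))"
  by (rule additive_on_sum[OF vecs_subspace]) (use fd_alg_add_right[OF fd] in blast)+

lemma fd_alg_zero_left: "b \<in> vecs n \<Longrightarrow> mul 0 b = 0"
  using fd_alg_sum_left[of "{}"] by simp

lemma fd_alg_zero_right: "a \<in> vecs n \<Longrightarrow> mul a 0 = 0"
  using fd_alg_sum_right[of "{}"] by simp

lemma fd_alg_mul_expand:
  assumes a: "a \<in> vecs n" and b: "b \<in> vecs n"
  shows "mul a b r = (\<Sum>p<n. \<Sum>q<n. a p * b q * mul (delta p) (delta q) r)"
proof -
  have "mul a b = mul (\<Sum>p<n. sc (a p) (delta p)) (\<Sum>q<n. sc (b q) (delta q))"
    using vecs_eq_sum_delta[OF a] vecs_eq_sum_delta[OF b] by simp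
  also have "\<dots> = (\<Sum>p<n. mul (sc (a p) (delta p)) (\<Sum>q<n. sc (b q) (delta q)))"
    by (rule fd_alg_sum_left) (auto intro!: vecs_sc delta_in_vecs fv.subspace_sum[OF vecs_subspace])
  also have "\<dots> = (\<Sum>p<n. \<Sum>q<n. mul (sc (a p) (delta p)) (sc (b q) (delta q)))"
    by (intro sum.cong refl fd_alg_sum_right) (auto intro!: vecs_sc delta_in_vecs)
  also have "\<dots> = (\<Sum>p<n. \<Sum>q<n. sc (a p * b q) (mul (delta p) (delta q)))"
    using fd by (intro sum.cong refl)
      (simp add: fd_alg_sc_left fd_alg_sc_right vecs_sc delta_in_vecs fun_eq_iff)
  finally show ?thesis by (simp add: sum_fun_apply)
qed

end

section \<open>Duals of block decompositions\<close>

definition dual_pow :: "(nat \<Rightarrow> 'k::field) set \<Rightarrow> nat \<Rightarrow> (nat \<Rightarrow> (nat \<Rightarrow> 'k) \<Rightarrow> 'k) set" where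
  "dual_pow Y N = {\<Phi>. (\<forall>m<N. \<Phi> m \<in> dual Y) \<and> (\<forall>m\<ge>N. \<Phi> m = 0)}"

definition dual_pow_act :: "(nat \<Rightarrow> 'k::field) set \<Rightarrow> nat \<Rightarrow> ('a \<Rightarrow> (nat \<Rightarrow> 'k) \<Rightarrow> (nat \<Rightarrow> 'k))
    \<Rightarrow> (nat \<Rightarrow> (nat \<Rightarrow> 'k) \<Rightarrow> 'k) \<Rightarrow> 'a \<Rightarrow> (nat \<Rightarrow> (nat \<Rightarrow> 'k) \<Rightarrow> 'k)" where
  "dual_pow_act Y N L \<Phi> a = (\<lambda>m. if m < N then dact Y L (\<Phi> m) a else 0)"

lemma dpow_eq_dual_pow: "dpow n N = dual_pow (vecs n) N"
  by (simp add: dpow_def dual_pow_def)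

lemma dpow_act_eq_dual_pow_act: "dpow_act n N mul = dual_pow_act (vecs n) N mul"
  by (simp add: dpow_act_def dual_pow_act_def fun_eq_iff)

lemma rmod_iso_trans:
  assumes "rmod_iso A M actM smM N actN smN" and "rmod_iso A N actN smN Q actQ smQ"
  shows "rmod_iso A M actM smM Q actQ smQ"
proof -
  obtain F where F: "bij_betw F M N" "\<forall>x\<in>M. \<forall>y\<in>M. F (x + y) = F x + F y"
      "\<forall>c. \<forall>x\<in>M. F (smM c x) = smN c (F x)" "\<forall>x\<in>M. \<forall>a\<in>A. F (actM x a) = actN (F x) a"
    using assms(1) unfolding rmod_iso_def by blast
  obtain G where G: "bij_betw G N Q" "\<forall>x\<in>N. \<forall>y\<in>N. G (x + y) = G x + G y"
      "\<forall>c. \<forall>x\<in>N. G (smN c x) = smQ c (G x)" "\<forall>x\<in>N. \<forall>a\<in>A. G (actN x a) = actQ (G x) a"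
    using assms(2) unfolding rmod_iso_def by blast
  have "F x \<in> N" if "x \<in> M" for x using F(1) that by (auto simp: bij_betw_def)
  then show ?thesis
    unfolding rmod_iso_def using F G bij_betw_trans[OF F(1) G(1)] by (intro exI[of _ "G \<circ> F"]) auto
qed

lemma rmod_iso_dual_pow_one:
  "rmod_iso A (dual_pow Y 1) (dual_pow_act Y 1 L) dpow_sc (dual Y) (dact Y L) sc"
  unfolding rmod_iso_def
proof (intro exI[of _ "\<lambda>\<Phi>. \<Phi> 0"] conjI ballI allI)
  show "bij_betw (\<lambda>\<Phi>. \<Phi> 0) (dual_pow Y 1) (dual Y)"
    by (rule bij_betw_byWitness[where f' = "\<lambda>\<phi> m. if m = 0 then \<phi> else 0"])
      (auto simp: dual_pow_def fun_eq_iff dual_def)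
qed (simp_all add: dpow_sc_def dual_pow_act_def)

locale block_decomposition =
  fixes X :: "('x \<Rightarrow> 'k::field) set" and Y :: "(nat \<Rightarrow> 'k) set" and N :: nat
    and emb :: "nat \<Rightarrow> (nat \<Rightarrow> 'k) \<Rightarrow> ('x \<Rightarrow> 'k)" and crd :: "nat \<Rightarrow> ('x \<Rightarrow> 'k) \<Rightarrow> (nat \<Rightarrow> 'k)"
    and P :: "('x \<Rightarrow> 'k) \<Rightarrow> ('x \<Rightarrow> 'k)"
  assumes subspace_X: "fv.subspace X" and subspace_Y: "fv.subspace Y"
    and emb_in: "\<And>m y. m < N \<Longrightarrow> y \<in> Y \<Longrightarrow> emb m y \<in> X"
    and emb_add: "\<And>m y y'. m < N \<Longrightarrow> y \<in> Y \<Longrightarrow> y' \<in> Y \<Longrightarrow> emb m (y + y') = emb m y + emb m y'"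
    and emb_sc: "\<And>m c y. m < N \<Longrightarrow> y \<in> Y \<Longrightarrow> emb m (sc c y) = sc c (emb m y)"
    and crd_in: "\<And>m x. m < N \<Longrightarrow> x \<in> X \<Longrightarrow> crd m x \<in> Y"
    and crd_add: "\<And>m x x'. m < N \<Longrightarrow> x \<in> X \<Longrightarrow> x' \<in> X \<Longrightarrow> crd m (x + x') = crd m x + crd m x'"
    and crd_sc: "\<And>m c x. m < N \<Longrightarrow> x \<in> X \<Longrightarrow> crd m (sc c x) = sc c (crd m x)"
    and crd_emb: "\<And>m m' y. m < N \<Longrightarrow> m' < N \<Longrightarrow> y \<in> Y \<Longrightarrow> crd m' (emb m y) = (if m' = m then y else 0)"
    and P_decomp: "\<And>x. x \<in> X \<Longrightarrow> P x = (\<Sum>m<N. emb m (crd m x))"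
begin

definition restr_dual :: "(('x \<Rightarrow> 'k) \<Rightarrow> 'k) \<Rightarrow> ('x \<Rightarrow> 'k) \<Rightarrow> 'k" where
  "restr_dual \<phi> = (\<lambda>x. if x \<in> X then \<phi> (P x) else 0)"

definition blocks :: "(('x \<Rightarrow> 'k) \<Rightarrow> 'k) \<Rightarrow> nat \<Rightarrow> (nat \<Rightarrow> 'k) \<Rightarrow> 'k" where
  "blocks \<psi> = (\<lambda>m. if m < N then (\<lambda>y. if y \<in> Y then \<psi> (emb m y) else 0) else 0)"

lemma emb_zero: "m < N \<Longrightarrow> emb m 0 = 0"
  using emb_sc[of m 0 0] subspace_Y by (simp add: fv.subspace_def sc_def zero_fun_def)

lemma P_emb: assumes "m < N" "y \<in> Y" shows "P (emb m y) = emb m y"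
proof -
  have "P (emb m y) = (\<Sum>m'<N. emb m' (if m' = m then y else 0))"
    using assms by (simp add: P_decomp emb_in crd_emb)
  also have "\<dots> = (\<Sum>m'<N. if m' = m then emb m y else 0)"
    by (rule sum.cong) (simp_all add: emb_zero)
  finally show ?thesis using assms(1) by simp
qed

lemma restr_dual_emb:
  "m < N \<Longrightarrow> y \<in> Y \<Longrightarrow> restr_dual \<phi> (emb m y) = \<phi> (emb m y)"
  by (simp add: restr_dual_def emb_in P_emb)

lemma restr_dual_expand:
  assumes \<phi>: "\<phi> \<in> dual X" and x: "x \<in> X"
  shows "restr_dual \<phi> x = (\<Sum>m<N. blocks (restr_dual \<phi>) m (crd m x))"
proof -
  have "restr_dual \<phi> x = \<phi> (\<Sum>m<N. emb m (crd m x))"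
    using x by (simp add: restr_dual_def P_decomp)
  also have "\<dots> = (\<Sum>m<N. \<phi> (emb m (crd m x)))"
    using x by (intro dual_sum[OF subspace_X \<phi>]) (simp add: emb_in crd_in)
  also have "\<dots> = (\<Sum>m<N. blocks (restr_dual \<phi>) m (crd m x))"
    using x by (intro sum.cong) (simp_all add: blocks_def crd_in restr_dual_emb)
  finally show ?thesis .
qed

lemma blocks_in_dual_pow:
  assumes \<phi>: "\<phi> \<in> dual X" shows "blocks (restr_dual \<phi>) \<in> dual_pow Y N"
  unfolding dual_pow_def
proof (intro CollectI conjI allI impI)
  fix m assume m: "m < N"
  have b: "blocks (restr_dual \<phi>) m y = \<phi> (emb m y)" if "y \<in> Y" for y
    using m that by (simp add: blocks_def restr_dual_emb)
  have "y + y' \<in> Y" "sc c y \<in> Y" if "y \<in> Y" "y' \<in> Y" for y y' c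
    using subspace_Y that by (simp_all add: fv.subspace_def)
  then show "blocks (restr_dual \<phi>) m \<in> dual Y"
    using m by (intro dualI) (simp_all add: b emb_add emb_sc emb_in dualD[OF \<phi>], simp add: blocks_def)
qed (simp add: blocks_def)

lemma dual_of_coords:
  assumes \<Phi>: "\<Phi> \<in> dual_pow Y N"
  shows "(\<lambda>x. if x \<in> X then \<Sum>m<N. \<Phi> m (crd m x) else 0) \<in> dual X"
proof -
  have \<Phi>m: "m < N \<Longrightarrow> \<Phi> m \<in> dual Y" for m using \<Phi> by (simp add: dual_pow_def)
  show ?thesis
    using subspace_closedD[OF subspace_X]
    by (intro dualI) (simp_all add: crd_add crd_sc crd_in dualD[OF \<Phi>m] sum.distrib sum_distrib_left)
qed

lemma bij_betw_blocks: "bij_betw blocks (restr_dual ` dual X) (dual_pow Y N)"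
proof (rule bij_betw_imageI)
  show "inj_on blocks (restr_dual ` dual X)"
  proof (rule inj_onI)
    fix \<psi> \<psi>' assume "\<psi> \<in> restr_dual ` dual X" "\<psi>' \<in> restr_dual ` dual X"
      and eq: "blocks \<psi> = blocks \<psi>'"
    then obtain \<phi> \<phi>' where \<phi>: "\<phi> \<in> dual X" "\<phi>' \<in> dual X" and "\<psi> = restr_dual \<phi>" "\<psi>' = restr_dual \<phi>'"
      by blast
    moreover have "restr_dual \<phi> x = restr_dual \<phi>' x" for x
      using eq \<open>\<psi> = restr_dual \<phi>\<close> \<open>\<psi>' = restr_dual \<phi>'\<close>
      by (cases "x \<in> X") (simp_all add: restr_dual_expand[OF \<phi>(1)] restr_dual_expand[OF \<phi>(2)], simp add: restr_dual_def)
    ultimately show "\<psi> = \<psi>'" by auto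
  qed
  show "blocks ` restr_dual ` dual X = dual_pow Y N"
  proof
    show "blocks ` restr_dual ` dual X \<subseteq> dual_pow Y N" using blocks_in_dual_pow by blast
  next
    show "dual_pow Y N \<subseteq> blocks ` restr_dual ` dual X"
    proof
      fix \<Phi> assume \<Phi>: "\<Phi> \<in> dual_pow Y N"
      define \<phi> where "\<phi> = (\<lambda>x. if x \<in> X then \<Sum>m<N. \<Phi> m (crd m x) else 0)"
      have "blocks (restr_dual \<phi>) m y = \<Phi> m y" for m y
      proof (cases "m < N \<and> y \<in> Y")
        case True
        have "\<Phi> m' 0 = 0" if "m' < N" for m'
          using \<Phi> that dual_zero[OF subspace_Y] by (simp add: dual_pow_def)
        then show ?thesis
          using True by (simp add: blocks_def restr_dual_emb \<phi>_def emb_in crd_emb if_distrib cong: if_cong)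
      next
        case False
        then show ?thesis using \<Phi> by (auto simp: blocks_def dual_pow_def dual_def)
      qed
      then have "\<Phi> = blocks (restr_dual \<phi>)" by (simp add: fun_eq_iff)
      then show "\<Phi> \<in> blocks ` restr_dual ` dual X"
        using dual_of_coords[OF \<Phi>] unfolding \<phi>_def[symmetric] by blast
    qed
  qed
qed

theorem rmod_iso_dual_pow:
  assumes act_emb: "\<And>a m y. a \<in> A \<Longrightarrow> m < N \<Longrightarrow> y \<in> Y \<Longrightarrow> L a (emb m y) = emb m (M a y)"
    and act_Y: "\<And>a y. a \<in> A \<Longrightarrow> y \<in> Y \<Longrightarrow> M a y \<in> Y"
  shows "rmod_iso A (restr_dual ` dual X) (dact X L) sc (dual_pow Y N) (dual_pow_act Y N M) dpow_sc"
  unfolding rmod_iso_def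
proof (intro exI[of _ blocks] conjI ballI allI)
  fix \<psi> a assume "a \<in> A"
  then show "blocks (dact X L \<psi> a) = dual_pow_act Y N M (blocks \<psi>) a"
    by (auto simp: fun_eq_iff blocks_def dual_pow_act_def dact_def act_emb act_Y emb_in)
qed (simp_all add: bij_betw_blocks fun_eq_iff blocks_def dpow_sc_def)

end

section \<open>The generalized path algebra\<close>

lemma sum_over_image_support:
  assumes "finite A" "inj_on h K" "h ` K \<subseteq> A" "\<And>u. u \<in> A \<Longrightarrow> u \<notin> h ` K \<Longrightarrow> F u = 0"
  shows "sum F A = (\<Sum>k\<in>K. F (h k))"
proof -
  have "sum F A = sum F (h ` K)"
    by (rule sum.mono_neutral_right) (use assms in auto)
  also have "\<dots> = (\<Sum>k\<in>K. F (h k))" using sum.reindex[OF assms(2)] by simp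
  finally show ?thesis .
qed

lemma gincl_trivial: "p < d v \<Longrightarrow> gincl d v a (v, [], [p]) = a p"
  by (simp add: gincl_def)

lemma gincl_eq_0: "u \<notin> (\<lambda>p. (v, [], [p])) ` {..<d v} \<Longrightarrow> gincl d v a u = 0"
proof (cases u)
  case (fields v' as "is")
  assume u: "u \<notin> (\<lambda>p. (v, [], [p])) ` {..<d v}"
  show ?thesis
  proof (cases "v' = v \<and> as = [] \<and> length is = 1 \<and> hd is < d v")
    case True
    then have "is = [hd is]" by (cases "is") auto
    then show ?thesis using True u fields by (metis image_eqI lessThan_iff)
  qed (auto simp: gincl_def fields)
qed

lemma gincl_add: "gincl d v (y + y') = gincl d v y + gincl d v y'"
  and gincl_sc: "gincl d v (sc c y) = sc c (gincl d v y)"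
  for y :: "nat \<Rightarrow> 'k::field"
  by (auto simp: gincl_def fun_eq_iff)

lemma gincl_first_slice: "y \<in> vecs (d v) \<Longrightarrow> (\<lambda>q. gincl d v y (v, [], [q])) = y"
  by (auto simp: gincl_def vecs_def)

locale path_algebra =
  fixes V E :: "nat set" and src tgt :: "nat \<Rightarrow> nat" and d :: "nat \<Rightarrow> nat"
    and mul :: "nat \<Rightarrow> (nat \<Rightarrow> 'k::field) \<Rightarrow> (nat \<Rightarrow> 'k) \<Rightarrow> (nat \<Rightarrow> 'k)"
    and one :: "nat \<Rightarrow> (nat \<Rightarrow> 'k)"
  assumes quiver: "quiver V E src tgt" and acyclic: "acyclic_quiver V E src tgt"
    and fd: "\<And>v. v \<in> V \<Longrightarrow> fd_alg (d v) (mul v) (one v)"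
begin

abbreviation "W \<equiv> gwords V E src tgt d"
abbreviation "pmul \<equiv> gpa_mult V E src tgt d mul"
abbreviation "\<Lambda> \<equiv> (gpa V E src tgt d :: ((nat \<times> nat list \<times> nat list) \<Rightarrow> 'k) set)"
abbreviation "is_path \<equiv> qpath V E src tgt"

lemma finite_V: "finite V" and finite_E: "finite E" and tgt_in_V: "\<alpha> \<in> E \<Longrightarrow> tgt \<alpha> \<in> V"
  using quiver by (auto simp: quiver_def)

lemma pvert_in_V: "is_path v as \<Longrightarrow> m \<le> length as \<Longrightarrow> pvert tgt v as m \<in> V"
  by (cases m) (auto simp: pvert_def qpath_def intro!: tgt_in_V)

lemma src_nth: "is_path v as \<Longrightarrow> m < length as \<Longrightarrow> src (as ! m) = pvert tgt v as m"
  by (cases m) (auto simp: pvert_def qpath_def hd_conv_nth)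

lemma path_loop_Nil: "is_path v as \<Longrightarrow> pend tgt v as = v \<Longrightarrow> as = []"
  using acyclic unfolding acyclic_quiver_def by blast

lemma pvert_take_drop:
  "m + k \<le> length as \<Longrightarrow> k \<le> n \<Longrightarrow>
    pvert tgt (pvert tgt v as m) (take n (drop m as)) k = pvert tgt v as (m + k)"
  by (cases k) (auto simp: pvert_def)

lemma is_path_subpath:
  assumes p: "is_path v as" and mm: "m \<le> m'" "m' \<le> length as"
  shows "is_path (pvert tgt v as m) (take (m' - m) (drop m as))"
    and "pend tgt (pvert tgt v as m) (take (m' - m) (drop m as)) = pvert tgt v as m'"
proof -
  show "is_path (pvert tgt v as m) (take (m' - m) (drop m as))"
    unfolding qpath_def
  proof (intro conjI allI impI)
    show "pvert tgt v as m \<in> V" using pvert_in_V[OF p] mm by simp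
    show "set (take (m' - m) (drop m as)) \<subseteq> E" using p
      by (auto simp: qpath_def dest: in_set_takeD in_set_dropD)
    assume ne: "take (m' - m) (drop m as) \<noteq> []"
    then show "src (hd (take (m' - m) (drop m as))) = pvert tgt v as m"
      using src_nth[OF p] by (simp add: hd_conv_nth)
  next
    fix k assume "Suc k < length (take (m' - m) (drop m as))"
    then show "tgt (take (m' - m) (drop m as) ! k) = src (take (m' - m) (drop m as) ! Suc k)"
      using p by (auto simp: qpath_def)
  qed
  show "pend tgt (pvert tgt v as m) (take (m' - m) (drop m as)) = pvert tgt v as m'"
    unfolding pend_def using pvert_take_drop[of m "m' - m" as "m' - m"] mm by simp
qed

text \<open>Acyclicity makes the vertices along a path pairwise distinct.\<close>

lemma path_length_less_card: assumes p: "is_path v as" shows "length as < card V"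
proof -
  have no_repeat: "pvert tgt v as m \<noteq> pvert tgt v as m'" if "m < m'" "m' \<le> length as" for m m'
    using is_path_subpath[OF p, of m m'] path_loop_Nil that by fastforce
  have "inj_on (pvert tgt v as) {0..length as}"
    by (rule inj_onI) (metis atLeastAtMost_iff linorder_neqE_nat no_repeat)
  moreover have "pvert tgt v as ` {0..length as} \<subseteq> V" using pvert_in_V[OF p] by auto
  ultimately have "card {0..length as} \<le> card V" using card_inj_on_le finite_V by blast
  then show ?thesis by simp
qed

lemma wordsD:
  assumes "(v, bs, js) \<in> W"
  shows "is_path v bs" "length js = Suc (length bs)" "\<And>m. m < length js \<Longrightarrow> js ! m < d (pvert tgt v bs m)"
  using assms by (auto simp: gwords_def)

lemma words_indices_nonempty: "(v, bs, js) \<in> W \<Longrightarrow> js \<noteq> []"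
  using wordsD(2) by fastforce

lemma finite_words: "finite W"
proof -
  let ?A = "{as. set as \<subseteq> E \<and> length as \<le> card V}"
  let ?I = "{is. set is \<subseteq> {..<sum d V} \<and> length is \<le> Suc (card V)}"
  have mem: "(v, as, is) \<in> V \<times> ?A \<times> ?I" if w: "(v, as, is) \<in> W" for v as "is"
  proof -
    note g = wordsD[OF w]
    have "v \<in> V" "as \<in> ?A" using g(1) path_length_less_card[OF g(1)] by (auto simp: qpath_def)
    have "x < sum d V" if x: "x \<in> set is" for x
    proof -
      obtain m where m: "m < length is" "is ! m = x" using x by (auto simp: in_set_conv_nth)
      have "d (pvert tgt v as m) \<le> sum d V"
        using pvert_in_V[OF g(1)] m g(2) finite_V by (intro member_le_sum) auto
      then show ?thesis using g(3) m by fastforce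
    qed
    with \<open>v \<in> V\<close> \<open>as \<in> ?A\<close> show ?thesis using g(2) path_length_less_card[OF g(1)] by auto
  qed
  have "W \<subseteq> V \<times> ?A \<times> ?I"
  proof
    fix w assume "w \<in> W"
    then show "w \<in> V \<times> ?A \<times> ?I" using mem[of "fst w" "fst (snd w)" "snd (snd w)"] by simp
  qed
  moreover have "finite (V \<times> ?A \<times> ?I)"
    using finite_V finite_E by (auto intro!: finite_lists_length_le)
  ultimately show ?thesis by (rule finite_subset)
qed

lemma Lambda_outside: "x \<in> \<Lambda> \<Longrightarrow> w \<notin> W \<Longrightarrow> x w = 0"
  unfolding gpa_def by blast

lemma trivial_word: "v \<in> V \<Longrightarrow> p < d v \<Longrightarrow> (v, [], [p]) \<in> W"
  by (auto simp: gwords_def qpath_def pvert_def)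

lemma word_replace_first:
  assumes w: "(v, bs, js) \<in> W" and q: "q < d v"
  shows "(v, bs, q # tl js) \<in> W"
proof -
  note g = wordsD[OF w]
  have "(q # tl js) ! m < d (pvert tgt v bs m)" if "m < Suc (length bs)" for m
    using g(2) g(3)[of m] that q by (cases m) (auto simp: pvert_def nth_tl)
  then show ?thesis unfolding gwords_def using g(1,2) by auto
qed

lemma word_replace_last:
  assumes w: "(v, bs, js) \<in> W" and "pend tgt v bs = i" "p < d i"
  shows "(v, bs, butlast js @ [p]) \<in> W"
proof -
  note g = wordsD[OF w]
  have "(butlast js @ [p]) ! m < d (pvert tgt v bs m)" if "m < Suc (length bs)" for m
    using g assms that
    by (cases "m < length bs") (auto simp: nth_append nth_butlast pend_def less_Suc_eq)
  then show ?thesis unfolding gwords_def using g(1,2) by auto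
qed

lemma first_slice_in_vecs:
  assumes x: "x \<in> \<Lambda>" shows "(\<lambda>q. x (v, bs, q # js)) \<in> vecs (d v)"
proof -
  have "x (v, bs, q # js) = 0" if "q \<ge> d v" for q
    using wordsD(3)[of v bs "q # js" 0] that by (intro Lambda_outside[OF x]) (auto simp: pvert_def)
  then show ?thesis by (simp add: vecs_def)
qed

lemma last_slice_in_vecs:
  assumes x: "x \<in> \<Lambda>" and "pend tgt v bs = i" "length js = length bs"
  shows "(\<lambda>p. x (v, bs, js @ [p])) \<in> vecs (d i)"
proof -
  have "x (v, bs, js @ [p]) = 0" if "p \<ge> d i" for p
    using wordsD(3)[of v bs "js @ [p]" "length bs"] that assms(2,3)
    by (intro Lambda_outside[OF x]) (auto simp: pend_def nth_append)
  then show ?thesis by (simp add: vecs_def)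
qed

lemma pmul_in_Lambda: "pmul f g \<in> \<Lambda>"
  by (simp add: gpa_def gpa_mult_def)

lemma Lambda_add: "x \<in> \<Lambda> \<Longrightarrow> y \<in> \<Lambda> \<Longrightarrow> x + y \<in> \<Lambda>"
  and Lambda_sc: "x \<in> \<Lambda> \<Longrightarrow> sc c x \<in> \<Lambda>"
  by (simp_all add: gpa_def)

lemma gincl_in_Lambda: "v \<in> V \<Longrightarrow> gincl d v c \<in> \<Lambda>"
  unfolding gpa_def by (blast intro: gincl_eq_0 trivial_word)

lemma pmul_add_left: "pmul (f + f') g = pmul f g + pmul f' g"
  by (rule ext) (simp add: gpa_mult_def distrib_right sum.distrib)

lemma pmul_sc_left: "pmul (sc c f) g = sc c (pmul f g)"
  by (rule ext) (simp add: gpa_mult_def sum_distrib_left mult.assoc)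

lemma sum_words_gincl:
  fixes F :: "nat \<times> nat list \<times> nat list \<Rightarrow> 'k"
  assumes v: "v \<in> V"
  shows "(\<Sum>u\<in>W. gincl d v a u * F u) = (\<Sum>p<d v. a p * F (v, [], [p]))"
proof -
  have "(\<Sum>u\<in>W. gincl d v a u * F u) = (\<Sum>p<d v. gincl d v a (v, [], [p]) * F (v, [], [p]))"
    by (rule sum_over_image_support[OF finite_words]) (auto simp: inj_on_def trivial_word v gincl_eq_0)
  also have "\<dots> = (\<Sum>p<d v. a p * F (v, [], [p]))"
    by (rule sum.cong) (simp_all add: gincl_trivial)
  finally show ?thesis .
qed

lemma sum_bcoef_trivial_left:
  assumes w: "(v', bs, js) \<in> W" and v: "v \<in> V"
  shows "(\<Sum>u'\<in>W. x u' * bcoef tgt mul (v, [], [p]) u' (v', bs, js)) =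
    (if v' = v then \<Sum>q<d v. x (v, bs, q # tl js) * mul v (delta p) (delta q) (hd js) else 0)"
proof (cases "v' = v")
  case True
  have js: "js \<noteq> []" using words_indices_nonempty[OF w] .
  have "bcoef tgt mul (v, [], [p]) u' (v', bs, js) = 0"
    if u': "u' \<in> W" "u' \<notin> (\<lambda>q. (v, bs, q # tl js)) ` {..<d v}" for u'
  proof (rule ccontr)
    obtain v1 as1 is1 where u'd: "u' = (v1, as1, is1)" by (cases u')
    assume "bcoef tgt mul (v, [], [p]) u' (v', bs, js) \<noteq> 0"
    then have c: "v1 = v" "as1 = bs" "tl is1 = tl js"
      using True by (auto simp: bcoef_def u'd pend_def pvert_def drop_Suc split: if_splits)
    have "is1 \<noteq> []" using words_indices_nonempty u'(1) by (simp add: u'd)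
    then have "is1 = hd is1 # tl js" "hd is1 < d v"
      using c wordsD(3)[of v1 as1 is1 0] u'(1) by (auto simp: u'd pvert_def hd_conv_nth neq_Nil_conv)
    then have "u' \<in> (\<lambda>q. (v, bs, q # tl js)) ` {..<d v}" using u'd c by force
    then show False using u'(2) by contradiction
  qed
  then have "(\<Sum>u'\<in>W. x u' * bcoef tgt mul (v, [], [p]) u' (v', bs, js)) =
      (\<Sum>q<d v. x (v, bs, q # tl js) * bcoef tgt mul (v, [], [p]) (v, bs, q # tl js) (v', bs, js))"
    using word_replace_first[OF w] True
    by (intro sum_over_image_support[OF finite_words]) (auto simp: inj_on_def)
  then show ?thesis
    using True js by (simp add: bcoef_def pend_def pvert_def hd_conv_nth drop_Suc)
next
  case False
  have "bcoef tgt mul (v, [], [p]) u' (v', bs, js) = 0" for u'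
    using False by (cases u') (simp add: bcoef_def)
  then show ?thesis using False by simp
qed

lemma pmul_gincl_left:
  assumes v: "v \<in> V" and a: "a \<in> vecs (d v)" and x: "x \<in> \<Lambda>"
  shows "pmul (gincl d v a) x (v', bs, js) =
    (if (v', bs, js) \<in> W \<and> v' = v then mul v a (\<lambda>q. x (v, bs, q # tl js)) (hd js) else 0)"
proof (cases "(v', bs, js) \<in> W")
  case w: True
  have "pmul (gincl d v a) x (v', bs, js) =
      (\<Sum>u\<in>W. gincl d v a u * (\<Sum>u'\<in>W. x u' * bcoef tgt mul u u' (v', bs, js)))"
    using w by (simp add: gpa_mult_def sum_distrib_left mult.assoc)
  also have "\<dots> = (\<Sum>p<d v. a p * (if v' = v then \<Sum>q<d v. x (v, bs, q # tl js) * mul v (delta p) (delta q) (hd js) else 0))"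
    by (simp add: sum_words_gincl v sum_bcoef_trivial_left[OF w v])
  also have "\<dots> = (if v' = v then mul v a (\<lambda>q. x (v, bs, q # tl js)) (hd js) else 0)"
    using fd_alg_mul_expand[OF fd[OF v] a first_slice_in_vecs[OF x]]
    by (simp add: sum_distrib_left mult.assoc)
  finally show ?thesis using w by simp
qed (simp add: gpa_mult_def)

lemma sum_bcoef_trivial_right:
  assumes w: "(v, bs, js) \<in> W"
  shows "(\<Sum>u\<in>W. x u * bcoef tgt mul u (i, [], [q]) (v, bs, js)) =
    (if pend tgt v bs = i then \<Sum>p<d i. x (v, bs, butlast js @ [p]) * mul i (delta p) (delta q) (last js) else 0)"
proof (cases "pend tgt v bs = i")
  case True
  note g = wordsD[OF w]
  have "bcoef tgt mul u (i, [], [q]) (v, bs, js) = 0"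
    if u: "u \<in> W" "u \<notin> (\<lambda>p. (v, bs, butlast js @ [p])) ` {..<d i}" for u
  proof (rule ccontr)
    obtain v1 as1 is1 where ud: "u = (v1, as1, is1)" by (cases u)
    assume "bcoef tgt mul u (i, [], [q]) (v, bs, js) \<noteq> 0"
    then have c: "v1 = v" "as1 = bs" "take (length bs) is1 = butlast js"
      using g(2) by (auto simp: bcoef_def ud butlast_conv_take split: if_splits)
    have l1: "length is1 = Suc (length bs)" using wordsD(2)[of v1 as1 is1] u(1) ud c by simp
    then have "is1 = butlast js @ [is1 ! length bs]"
      using c(3) by (metis append_take_drop_id Cons_nth_drop_Suc drop_all lessI le_refl)
    moreover have "is1 ! length bs < d i"
      using wordsD(3)[of v1 as1 is1 "length bs"] u(1) ud c l1 True by (simp add: pend_def)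
    ultimately have "u \<in> (\<lambda>p. (v, bs, butlast js @ [p])) ` {..<d i}" using ud c by force
    then show False using u(2) by contradiction
  qed
  then have "(\<Sum>u\<in>W. x u * bcoef tgt mul u (i, [], [q]) (v, bs, js)) =
      (\<Sum>p<d i. x (v, bs, butlast js @ [p]) * bcoef tgt mul (v, bs, butlast js @ [p]) (i, [], [q]) (v, bs, js))"
    using word_replace_last[OF w True]
    by (intro sum_over_image_support[OF finite_words]) (auto simp: inj_on_def)
  moreover have "js ! length bs = last js" "take (length bs) js = butlast js"
    using g(2) words_indices_nonempty[OF w] by (simp_all add: last_conv_nth butlast_conv_take)
  ultimately show ?thesis using True g(2) by (simp add: bcoef_def)
next
  case False
  have "bcoef tgt mul u (i, [], [q]) (v, bs, js) = 0" for u
    using False by (cases u) (auto simp: bcoef_def)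
  then show ?thesis using False by simp
qed

lemma pmul_gincl_right:
  assumes i: "i \<in> V" and e: "e \<in> vecs (d i)" and x: "x \<in> \<Lambda>"
  shows "pmul x (gincl d i e) (v, bs, js) =
    (if (v, bs, js) \<in> W \<and> pend tgt v bs = i then mul i (\<lambda>p. x (v, bs, butlast js @ [p])) e (last js) else 0)"
proof (cases "(v, bs, js) \<in> W")
  case w: True
  let ?X = "\<lambda>p. x (v, bs, butlast js @ [p])" and ?M = "\<lambda>p q. mul i (delta p) (delta q) (last js)"
  have "pmul x (gincl d i e) (v, bs, js) =
      (\<Sum>u\<in>W. x u * (\<Sum>u'\<in>W. gincl d i e u' * bcoef tgt mul u u' (v, bs, js)))"
    using w by (simp add: gpa_mult_def sum_distrib_left mult.assoc)
  also have "\<dots> = (\<Sum>u\<in>W. \<Sum>q<d i. e q * (x u * bcoef tgt mul u (i, [], [q]) (v, bs, js)))"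
    by (simp add: sum_words_gincl i sum_distrib_left mult.left_commute)
  also have "\<dots> = (\<Sum>q<d i. e q * (\<Sum>u\<in>W. x u * bcoef tgt mul u (i, [], [q]) (v, bs, js)))"
    by (subst sum.swap) (simp add: sum_distrib_left)
  also have "\<dots> = (if pend tgt v bs = i then \<Sum>q<d i. \<Sum>p<d i. ?X p * e q * ?M p q else 0)"
    by (simp add: sum_bcoef_trivial_right[OF w] sum_distrib_left ac_simps)
  also have "\<dots> = (if pend tgt v bs = i then mul i ?X e (last js) else 0)"
    using fd_alg_mul_expand[OF fd[OF i] last_slice_in_vecs[OF x] e] wordsD(2)[OF w]
    by (subst sum.swap) simp
  finally show ?thesis using w by simp
qed (simp add: gpa_mult_def)

lemma pmul_unit_left:
  assumes l: "l \<in> V" and x: "x \<in> \<Lambda>"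
  shows "pmul (gincl d l (one l)) x (v, bs, js) = (if v = l then x (v, bs, js) else 0)"
  using pmul_gincl_left[OF l fd_alg_one[OF fd[OF l]] x] fd_alg_one_left[OF fd[OF l] first_slice_in_vecs[OF x]]
    words_indices_nonempty Lambda_outside[OF x] by auto

lemma gincl_first_slice_word:
  "y \<in> vecs (d v) \<Longrightarrow> (\<lambda>q. gincl d v y (v, bs, q # js)) = (if bs = [] \<and> js = [] then y else 0)"
  by (auto simp: gincl_def vecs_def fun_eq_iff)

lemma pmul_gincl_gincl:
  assumes v: "v \<in> V" and a: "a \<in> vecs (d v)" and y: "y \<in> vecs (d v)"
  shows "pmul (gincl d v a) (gincl d v y) = gincl d v (mul v a y)"
proof (intro ext, clarify)
  fix v' bs js
  have lhs: "pmul (gincl d v a) (gincl d v y) (v', bs, js) =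
      (if (v', bs, js) \<in> W \<and> v' = v \<and> bs = [] \<and> tl js = [] then mul v a y (hd js) else 0)"
    using pmul_gincl_left[OF v a gincl_in_Lambda[OF v], of y v' bs js] fd_alg_zero_right[OF fd[OF v] a]
    unfolding gincl_first_slice_word[OF y] by auto
  show "pmul (gincl d v a) (gincl d v y) (v', bs, js) = gincl d v (mul v a y) (v', bs, js)"
  proof (cases "(v', bs, js) \<in> W \<and> v' = v \<and> bs = [] \<and> tl js = []")
    case True
    then have "js \<noteq> []" using words_indices_nonempty by blast
    then have "js = [hd js]" "hd js < d v"
      using True wordsD(3)[of v' bs js 0] by (auto simp: pvert_def hd_conv_nth neq_Nil_conv)
    then show ?thesis using lhs True by (metis gincl_trivial)
  next
    case False
    have "(v', bs, js) \<notin> (\<lambda>p. (v, [], [p])) ` {..<d v}"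
      using False trivial_word[OF v] by auto
    then show ?thesis using lhs False by (simp add: gincl_eq_0)
  qed
qed

end

section \<open>The representation of \<open>I(i,j)\<close>\<close>

locale indec_injective = path_algebra V E src tgt d mul one
  for V E src tgt d and mul :: "nat \<Rightarrow> (nat \<Rightarrow> 'k::field) \<Rightarrow> (nat \<Rightarrow> 'k) \<Rightarrow> (nat \<Rightarrow> 'k)" and one +
  fixes i :: nat and e :: "nat \<Rightarrow> 'k"
  assumes i_in_V: "i \<in> V" and e_in_vecs: "e \<in> vecs (d i)"
begin

abbreviation "\<Lambda>e \<equiv> gpa_proj V E src tgt d mul i e"
abbreviation "Ae \<equiv> left_ideal (d i) (mul i) e"
abbreviation "restr l x \<equiv> pmul (gincl d l (one l)) x"

lemma proj_in_Lambda: "x \<in> \<Lambda>e \<Longrightarrow> x \<in> \<Lambda>"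
  by (auto simp: gpa_proj_def pmul_in_Lambda)

lemma proj_subspace: "fv.subspace \<Lambda>e"
proof (rule fv.subspaceI)
  have "pmul 0 (gincl d i e) = 0" "(0 :: (nat \<times> nat list \<times> nat list) \<Rightarrow> 'k) \<in> \<Lambda>"
    by (simp_all add: gpa_mult_def gpa_def fun_eq_iff)
  then show "0 \<in> \<Lambda>e" unfolding gpa_proj_def by (metis image_eqI)
next
  fix x y assume "x \<in> \<Lambda>e" "y \<in> \<Lambda>e"
  then obtain f g where "f \<in> \<Lambda>" "g \<in> \<Lambda>" "x = pmul f (gincl d i e)" "y = pmul g (gincl d i e)"
    unfolding gpa_proj_def by blast
  then have "x + y = pmul (f + g) (gincl d i e)" "f + g \<in> \<Lambda>"
    by (simp_all add: pmul_add_left Lambda_add)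
  then show "x + y \<in> \<Lambda>e" unfolding gpa_proj_def by blast
next
  fix c x assume "x \<in> \<Lambda>e"
  then obtain f where "f \<in> \<Lambda>" "x = pmul f (gincl d i e)"
    unfolding gpa_proj_def by blast
  then have "sc c x = pmul (sc c f) (gincl d i e)" "sc c f \<in> \<Lambda>"
    by (simp_all add: pmul_sc_left Lambda_sc)
  then show "sc c x \<in> \<Lambda>e" unfolding gpa_proj_def by blast
qed

lemma projE:
  assumes "x \<in> \<Lambda>e"
  obtains f where "f \<in> \<Lambda>" "\<And>v bs js. x (v, bs, js) =
    (if (v, bs, js) \<in> W \<and> pend tgt v bs = i then mul i (\<lambda>p. f (v, bs, butlast js @ [p])) e (last js) else 0)"
  using assms pmul_gincl_right[OF i_in_V e_in_vecs] unfolding gpa_proj_def by blast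

lemma proj_support: "x \<in> \<Lambda>e \<Longrightarrow> x (v, bs, js) \<noteq> 0 \<Longrightarrow> (v, bs, js) \<in> W \<and> pend tgt v bs = i"
  by (erule projE) (auto split: if_splits)

lemma Ae_subset_vecs: "Ae \<subseteq> vecs (d i)"
  using fd_alg_closed[OF fd[OF i_in_V] _ e_in_vecs] unfolding left_ideal_def by blast

lemma Ae_subspace: "fv.subspace Ae"
proof (rule fv.subspaceI)
  note fd_i = fd[OF i_in_V]
  have "mul i 0 e = 0" "(0::nat \<Rightarrow> 'k) \<in> vecs (d i)"
    using fd_alg_zero_left[OF fd_i e_in_vecs] by (simp_all add: vecs_def)
  then show "0 \<in> Ae" unfolding left_ideal_def by (metis image_eqI)
next
  fix x y assume "x \<in> Ae" "y \<in> Ae"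
  then obtain a b where ab: "a \<in> vecs (d i)" "b \<in> vecs (d i)" "x = mul i a e" "y = mul i b e"
    unfolding left_ideal_def by blast
  then have "x + y = mul i (a + b) e" "a + b \<in> vecs (d i)"
    using fd_alg_add_left[OF fd[OF i_in_V] _ _ e_in_vecs] subspace_closedD(1)[OF vecs_subspace] by simp_all
  then show "x + y \<in> Ae" unfolding left_ideal_def by blast
next
  fix c x assume "x \<in> Ae"
  then obtain a where a: "a \<in> vecs (d i)" "x = mul i a e"
    unfolding left_ideal_def by blast
  then have "sc c x = mul i (sc c a) e" "sc c a \<in> vecs (d i)"
    using fd_alg_sc_left[OF fd[OF i_in_V] _ e_in_vecs] vecs_sc by simp_all
  then show "sc c x \<in> Ae" unfolding left_ideal_def by blast
qed

lemma Ae_mul_left: assumes a: "a \<in> vecs (d i)" and y: "y \<in> Ae" shows "mul i a y \<in> Ae"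
proof -
  obtain c where c: "c \<in> vecs (d i)" "y = mul i c e" using y unfolding left_ideal_def by blast
  then have "mul i a y = mul i (mul i a c) e" "mul i a c \<in> vecs (d i)"
    using fd_alg_assoc[OF fd[OF i_in_V] a c(1) e_in_vecs] fd_alg_closed[OF fd[OF i_in_V] a c(1)] by simp_all
  then show ?thesis unfolding left_ideal_def by blast
qed

lemma gincl_Ae_in_proj: assumes y: "y \<in> Ae" shows "gincl d i y \<in> \<Lambda>e"
proof -
  obtain c where c: "c \<in> vecs (d i)" "y = mul i c e" using y unfolding left_ideal_def by blast
  then have "gincl d i y = pmul (gincl d i c) (gincl d i e)"
    using pmul_gincl_gincl[OF i_in_V c(1) e_in_vecs] by simp
  then show ?thesis using gincl_in_Lambda[OF i_in_V] unfolding gpa_proj_def by blast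
qed

text \<open>Elements of \<open>\<Lambda> e\<close> are right multiples of \<open>e\<close>, so their last tensor factor lies in \<open>A_i e\<close>.\<close>

lemma proj_last_slice_in_Ae:
  assumes x: "x \<in> \<Lambda>e" and w: "(v, bs, t @ [r0]) \<in> W" and p: "pend tgt v bs = i"
  shows "(\<lambda>r. x (v, bs, t @ [r])) \<in> Ae"
proof -
  obtain f where f: "f \<in> \<Lambda>" and xf: "\<And>v bs js. x (v, bs, js) =
    (if (v, bs, js) \<in> W \<and> pend tgt v bs = i then mul i (\<lambda>p. f (v, bs, butlast js @ [p])) e (last js) else 0)"
    using projE[OF x] by blast
  let ?X = "\<lambda>q. f (v, bs, t @ [q])"
  have len: "length t = length bs" using wordsD(2)[OF w] by simp
  have X: "?X \<in> vecs (d i)" using last_slice_in_vecs[OF f p len] .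
  have "x (v, bs, t @ [r]) = mul i ?X e r" for r
  proof (cases "r < d i")
    case True
    then show ?thesis using xf p word_replace_last[OF w p True] by simp
  next
    case False
    have "(v, bs, t @ [r]) \<notin> W"
      using wordsD(3)[of v bs "t @ [r]" "length bs"] False p len by (auto simp: pend_def nth_append)
    then show ?thesis
      using xf fd_alg_closed[OF fd[OF i_in_V] X e_in_vecs] False by (simp add: vecs_def)
  qed
  then show ?thesis using X unfolding left_ideal_def by (auto simp: fun_eq_iff)
qed

lemma vertex_slice_in_Ae: assumes x: "x \<in> \<Lambda>e" shows "(\<lambda>q. x (i, [], [q])) \<in> Ae"
proof (cases "d i = 0")
  case True
  then have "(\<lambda>q. x (i, [], [q])) = 0"
    using proj_support[OF x, of i "[]"] wordsD(3)[of i "[]" _ 0] by (fastforce simp: pvert_def)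
  then show ?thesis using Ae_subspace fv.subspace_0 by metis
next
  case False
  then have "(i, [], [] @ [0]) \<in> W" using trivial_word[OF i_in_V] by simp
  then show ?thesis using proj_last_slice_in_Ae[OF x, of i "[]" "[]"] by (simp add: pend_def pvert_def)
qed

text \<open>By acyclicity, the only words of \<open>\<Lambda> e\<close> starting at \<open>i\<close> are the trivial ones.\<close>

lemma restr_vertex:
  assumes x: "x \<in> \<Lambda>e" shows "restr i x = gincl d i (\<lambda>q. x (i, [], [q]))"
proof (intro ext, clarify)
  fix v bs js
  have "x (v, bs, js) = gincl d i (\<lambda>q. x (i, [], [q])) (v, bs, js)" if vi: "v = i"
  proof (cases "x (v, bs, js) = 0")
    case False
    then have w: "(v, bs, js) \<in> W" "pend tgt v bs = i" using proj_support[OF x] by auto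
    then have "bs = []" using path_loop_Nil[OF wordsD(1)[OF w(1)]] vi by simp
    then obtain q where "js = [q]" "q < d i"
      using wordsD(2,3)[OF w(1)] vi by (auto simp: pvert_def length_Suc_conv)
    then show ?thesis using vi \<open>bs = []\<close> by (simp add: gincl_trivial)
  next
    case True
    then show ?thesis using vi by (auto simp: gincl_def length_Suc_conv)
  qed
  then show "restr i x (v, bs, js) = gincl d i (\<lambda>q. x (i, [], [q])) (v, bs, js)"
    using pmul_unit_left[OF i_in_V proj_in_Lambda[OF x]] by (auto simp: gincl_def)
qed

lemma rep_space_eq: "rep_space V E src tgt d mul one i e l = (\<lambda>\<phi> x. if x \<in> \<Lambda>e then \<phi> (restr l x) else 0) ` dual \<Lambda>e"
  by (simp add: rep_space_def inj_act_def dact_def)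

lemma rep_act_eq: "rep_act V E src tgt d mul i e l = dact \<Lambda>e (\<lambda>a. pmul (gincl d l a))"
  by (simp add: rep_act_def inj_act_def dact_def fun_eq_iff)

theorem rep_space_at_vertex_iso:
  "rmod_iso (vecs (d i)) (rep_space V E src tgt d mul one i e i) (rep_act V E src tgt d mul i e i) sc
     (dual Ae) (dact Ae (mul i)) sc"
proof -
  interpret bd: block_decomposition \<Lambda>e Ae 1 "\<lambda>_. gincl d i" "\<lambda>_ x q. x (i, [], [q])" "restr i"
  proof unfold_locales
    fix m m' :: nat and y assume "m < 1" "m' < 1" "y \<in> Ae"
    then show "(\<lambda>q. gincl d i y (i, [], [q])) = (if m' = m then y else 0)"
      using Ae_subset_vecs gincl_first_slice by auto
  next
    fix x assume "x \<in> \<Lambda>e"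
    then show "restr i x = (\<Sum>m<1::nat. gincl d i (\<lambda>q. x (i, [], [q])))" using restr_vertex by simp
  qed (auto simp: proj_subspace Ae_subspace gincl_Ae_in_proj gincl_add gincl_sc vertex_slice_in_Ae fun_eq_iff)
  have "rmod_iso (vecs (d i)) (bd.restr_dual ` dual \<Lambda>e) (dact \<Lambda>e (\<lambda>a. pmul (gincl d i a))) sc
      (dual_pow Ae 1) (dual_pow_act Ae 1 (mul i)) dpow_sc"
    using Ae_subset_vecs by (intro bd.rmod_iso_dual_pow) (auto simp: pmul_gincl_gincl i_in_V Ae_mul_left)
  then show ?thesis
    unfolding rep_space_eq rep_act_eq bd.restr_dual_def[abs_def]
    using rmod_iso_trans rmod_iso_dual_pow_one by blast
qed

theorem rep_space_trivial_without_path: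
  assumes l: "l \<in> V" and no_path: "\<not> (\<exists>as. is_path l as \<and> pend tgt l as = i)"
  shows "rep_space V E src tgt d mul one i e l = {0}"
proof -
  have restr_0: "restr l x = 0" if x: "x \<in> \<Lambda>e" for x
  proof (intro ext, clarify)
    fix v bs js
    have "x (l, bs, js) = 0"
    proof (rule ccontr)
      assume "x (l, bs, js) \<noteq> 0"
      then have "is_path l bs" "pend tgt l bs = i" using proj_support[OF x] wordsD(1)[of l bs js] by auto
      then show False using no_path by blast
    qed
    then show "restr l x (v, bs, js) = 0 (v, bs, js)"
      using pmul_unit_left[OF l proj_in_Lambda[OF x]] by simp
  qed
  have "(\<lambda>\<phi> x. if x \<in> \<Lambda>e then \<phi> (restr l x) else 0) ` dual \<Lambda>e = (\<lambda>_. 0) ` dual \<Lambda>e"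
    by (intro image_cong) (simp_all add: restr_0 dual_zero[OF proj_subspace] fun_eq_iff)
  moreover have "(0 :: ((nat \<times> nat list \<times> nat list) \<Rightarrow> 'k) \<Rightarrow> 'k) \<in> dual \<Lambda>e"
    by (simp add: dual_def)
  ultimately show ?thesis unfolding rep_space_eq by auto
qed

end


lemma list_hd_middle_last: "2 \<le> length js \<Longrightarrow> js = hd js # tl (butlast js) @ [last js]"
  by (cases js) auto

lemma lists_nth_less_Suc:
  "{t. length t = Suc n \<and> (\<forall>m<Suc n. t ! m < f m)} =
     (\<lambda>(x, t). x # t) ` ({..<f 0} \<times> {t. length t = n \<and> (\<forall>m<n. t ! m < f (Suc m))})"
  for f :: "nat \<Rightarrow> nat"
proof (intro set_eqI iffI)
  fix t assume "t \<in> {t. length t = Suc n \<and> (\<forall>m<Suc n. t ! m < f m)}"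
  show "t \<in> (\<lambda>(x, t). x # t) ` ({..<f 0} \<times> {t. length t = n \<and> (\<forall>m<n. t ! m < f (Suc m))})"
  proof (cases t)
    case (Cons x t')
    then have "x < f 0" "t' \<in> {t. length t = n \<and> (\<forall>m<n. t ! m < f (Suc m))}" using \<open>t \<in> _\<close> by auto
    then show ?thesis using Cons by force
  qed (use \<open>t \<in> _\<close> in simp)
next
  fix t assume "t \<in> (\<lambda>(x, t). x # t) ` ({..<f 0} \<times> {t. length t = n \<and> (\<forall>m<n. t ! m < f (Suc m))})"
  then show "t \<in> {t. length t = Suc n \<and> (\<forall>m<Suc n. t ! m < f m)}"
    by (auto simp: less_Suc_eq_0_disj)
qed

lemma finite_lists_nth_less: "finite {t. length t = n \<and> (\<forall>m<n. t ! m < f m)}" for f :: "nat \<Rightarrow> nat"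
proof (induction n arbitrary: f)
  case (Suc n)
  show ?case unfolding lists_nth_less_Suc by (intro finite_imageI finite_cartesian_product Suc) simp
qed simp

lemma card_lists_nth_less: "card {t. length t = n \<and> (\<forall>m<n. t ! m < f m)} = (\<Prod>m<n. f m)"
  for f :: "nat \<Rightarrow> nat"
proof (induction n arbitrary: f)
  case (Suc n)
  have "inj_on (\<lambda>(x, t). x # t) ({..<f 0} \<times> {t. length t = n \<and> (\<forall>m<n. t ! m < f (Suc m))})"
    by (auto simp: inj_on_def)
  then show ?case
    using Suc[of "\<lambda>m. f (Suc m)"]
    by (simp add: lists_nth_less_Suc card_image card_cartesian_product prod.lessThan_Suc_shift
        del: prod.lessThan_Suc)
qed simp

text \<open>The copies of \<open>A_l\<close> in \<open>1_l \<Lambda> e\<close> are indexed by triples \<open>(as, t, k)\<close>: a path \<open>as\<close> from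
  \<open>l\<close> to \<open>i\<close>, basis indices \<open>t\<close> at its inner vertices, and an element \<open>bl ! k\<close> of a basis of \<open>A_i e\<close>.\<close>

locale indec_injective_off = indec_injective V E src tgt d mul one i e
  for V E src tgt d and mul :: "nat \<Rightarrow> (nat \<Rightarrow> 'k::field) \<Rightarrow> (nat \<Rightarrow> 'k) \<Rightarrow> (nat \<Rightarrow> 'k)" and one i e +
  fixes l :: nat and bl :: "(nat \<Rightarrow> 'k) list"
  assumes l_in_V: "l \<in> V" and l_neq_i: "l \<noteq> i" and distinct_bl: "distinct bl"
    and independent_bl: "fv.independent (set bl)" and span_bl: "fv.span (set bl) = Ae"
begin

definition "paths_to_i = {as. is_path l as \<and> as \<noteq> [] \<and> pend tgt l as = i}"

definition "inner_indices as = {t. length t = length as - 1 \<and> (\<forall>m<length t. t ! m < d (tgt (as ! m)))}"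

definition "summands = {(as, t, k). as \<in> paths_to_i \<and> t \<in> inner_indices as \<and> k < length bl}"

definition path_tensor :: "nat list \<Rightarrow> nat list \<Rightarrow> (nat \<Rightarrow> 'k) \<Rightarrow> (nat \<Rightarrow> 'k) \<Rightarrow> (nat \<times> nat list \<times> nat list) \<Rightarrow> 'k" where
  "path_tensor as t y z = (\<lambda>(v, bs, js). if v = l \<and> bs = as \<and> length js = Suc (length as) \<and> tl (butlast js) = t
      then y (hd js) * z (last js) else 0)"

definition summand_emb :: "nat list \<times> nat list \<times> nat \<Rightarrow> (nat \<Rightarrow> 'k) \<Rightarrow> (nat \<times> nat list \<times> nat list) \<Rightarrow> 'k" where
  "summand_emb b y = (case b of (as, t, k) \<Rightarrow> path_tensor as t y (bl ! k))"

definition summand_coord :: "nat list \<times> nat list \<times> nat \<Rightarrow> ((nat \<times> nat list \<times> nat list) \<Rightarrow> 'k) \<Rightarrow> nat \<Rightarrow> 'k" where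
  "summand_coord b x = (case b of (as, t, k) \<Rightarrow>
     (\<lambda>q. if q < d l then fv.representation (set bl) (\<lambda>r. x (l, as, q # t @ [r])) (bl ! k) else 0))"

lemma paths_to_iD: "as \<in> paths_to_i \<Longrightarrow> is_path l as \<and> as \<noteq> [] \<and> pend tgt l as = i"
  by (simp add: paths_to_i_def)

lemma finite_paths_to_i: "finite paths_to_i"
proof -
  have "paths_to_i \<subseteq> {as. set as \<subseteq> E \<and> length as \<le> card V}"
    using path_length_less_card by (auto simp: paths_to_i_def qpath_def less_imp_le)
  then show ?thesis using finite_lists_length_le[OF finite_E] finite_subset by blast
qed

lemma inner_indices_eq:
  "inner_indices as = {t. length t = length as - 1 \<and> (\<forall>m<length as - 1. t ! m < d (tgt (as ! m)))}"
  by (auto simp: inner_indices_def)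

lemma summands_eq_Sigma: "summands = (SIGMA as:paths_to_i. inner_indices as \<times> {..<length bl})"
  by (auto simp: summands_def)

lemma finite_summands: "finite summands"
  unfolding summands_eq_Sigma inner_indices_eq
  by (intro finite_SigmaI finite_cartesian_product finite_paths_to_i finite_lists_nth_less) simp

lemma card_summands: "card summands = nmult V E src tgt d (length bl) l i"
  unfolding summands_eq_Sigma nmult_def paths_to_i_def[symmetric] inner_indices_eq
  by (simp add: finite_paths_to_i finite_lists_nth_less card_SigmaI card_cartesian_product card_lists_nth_less)

lemma summandsE:
  assumes "b \<in> summands"
  obtains as t k where "b = (as, t, k)" "as \<in> paths_to_i" "t \<in> inner_indices as" "k < length bl"
  using assms by (auto simp: summands_def)

lemma word_from_l:
  assumes as: "as \<in> paths_to_i" and t: "t \<in> inner_indices as" and q: "q < d l" and r: "r < d i"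
  shows "(l, as, q # t @ [r]) \<in> W"
proof -
  note P = paths_to_iD[OF as]
  have lt: "length t = length as - 1" and tb: "\<And>m. m < length t \<Longrightarrow> t ! m < d (tgt (as ! m))"
    using t by (auto simp: inner_indices_def)
  have len: "length (q # t @ [r]) = Suc (length as)" using lt P by (cases as) auto
  have "(q # t @ [r]) ! m < d (pvert tgt l as m)" if m: "m < Suc (length as)" for m
  proof (cases m)
    case (Suc m')
    then consider "m' < length t" | "m' = length t" "m = length as" using m lt P by linarith
    then show ?thesis
    proof cases
      case 2
      then have "pvert tgt l as m = i" using P by (simp add: pend_def)
      moreover have "(q # t @ [r]) ! m = r" using 2(1) Suc by simp
      ultimately show ?thesis using r by simp
    qed (use Suc tb in \<open>simp add: nth_append pvert_def\<close>)
  qed (simp add: q pvert_def)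
  then show ?thesis unfolding gwords_def using P len by auto
qed

lemma word_from_lD:
  assumes w: "(l, bs, js) \<in> W" and p: "pend tgt l bs = i"
  shows "bs \<in> paths_to_i" "tl (butlast js) \<in> inner_indices bs" "js = hd js # tl (butlast js) @ [last js]"
    "hd js < d l" "last js < d i"
proof -
  note g = wordsD[OF w]
  have bs: "bs \<noteq> []" using p l_neq_i by (auto simp: pend_def pvert_def)
  show "bs \<in> paths_to_i" using g(1) bs p by (simp add: paths_to_i_def)
  have l2: "length js \<ge> 2" using g(2) bs by (cases bs) auto
  then show "js = hd js # tl (butlast js) @ [last js]" by (rule list_hd_middle_last)
  show "hd js < d l" using g(3)[of 0] l2 by (cases js) (auto simp: pvert_def)
  have "js ! length bs = last js" using g(2) words_indices_nonempty[OF w] by (simp add: last_conv_nth)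
  then show "last js < d i" using g(3)[of "length bs"] g(2) p by (simp add: pend_def)
  have "tl (butlast js) ! m < d (tgt (bs ! m))" if m: "m < length (tl (butlast js))" for m
    using g(3)[of "Suc m"] m by (simp add: nth_tl nth_butlast pvert_def)
  then show "tl (butlast js) \<in> inner_indices bs" using g(2) by (simp add: inner_indices_def)
qed

lemma basis_in_Ae: "k < length bl \<Longrightarrow> bl ! k \<in> Ae"
  using span_bl fv.span_superset[of "set bl"] nth_mem by blast

lemma basis_in_vecs: "k < length bl \<Longrightarrow> bl ! k \<in> vecs (d i)"
  using basis_in_Ae Ae_subset_vecs by blast

context
  fixes as t assumes as: "as \<in> paths_to_i" and t: "t \<in> inner_indices as"
begin

lemma path_tensor_support:
  assumes y: "y \<in> vecs (d l)" and z: "z \<in> vecs (d i)" and nz: "path_tensor as t y z (v, bs, js) \<noteq> 0"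
  shows "(v, bs, js) \<in> W" and "v = l" and "bs = as" and "tl (butlast js) = t"
proof -
  have c: "v = l" "bs = as" "length js = Suc (length as)" "tl (butlast js) = t"
    using nz by (auto simp: path_tensor_def split: if_splits)
  then show "v = l" "bs = as" "tl (butlast js) = t" by auto
  have "y (hd js) \<noteq> 0" "z (last js) \<noteq> 0" using nz c by (auto simp: path_tensor_def)
  then have "hd js < d l" "last js < d i" using y z by (auto simp: vecs_def, meson not_le)+
  moreover have "js = hd js # t @ [last js]"
    using c paths_to_iD[OF as] list_hd_middle_last[of js] by (cases as) simp_all
  ultimately show "(v, bs, js) \<in> W" using word_from_l[OF as t] c by metis
qed

lemma path_tensor_in_Lambda:
  assumes "y \<in> vecs (d l)" "z \<in> vecs (d i)" shows "path_tensor as t y z \<in> \<Lambda>"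
proof (unfold gpa_def, intro CollectI allI impI)
  fix w assume "w \<notin> W"
  then show "path_tensor as t y z w = 0"
    using path_tensor_support(1)[OF assms, of "fst w" "fst (snd w)" "snd (snd w)"] by auto
qed

lemma path_tensor_slice:
  assumes "as' \<in> paths_to_i" "t' \<in> inner_indices as'"
  shows "(\<lambda>r. path_tensor as t y z (l, as', q # t' @ [r])) = (if as' = as \<and> t' = t then sc (y q) z else 0)"
  using assms by (auto simp: path_tensor_def inner_indices_def paths_to_i_def fun_eq_iff Suc_diff_1)

lemma path_tensor_first_slice:
  assumes "js \<noteq> []"
  shows "(\<lambda>q. path_tensor as t y z (l, bs, q # tl js)) =
    (if bs = as \<and> length js = Suc (length as) \<and> tl (butlast js) = t then sc (z (last js)) y else 0)"
  using assms paths_to_iD[OF as] by (cases js) (auto simp: path_tensor_def fun_eq_iff butlast_tl mult.commute)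

lemma path_tensor_last_slice:
  assumes "js \<noteq> []"
  shows "(\<lambda>p. path_tensor as t y z (v, bs, butlast js @ [p])) =
    (if v = l \<and> bs = as \<and> length js = Suc (length as) \<and> tl (butlast js) = t then sc (y (hd js)) z else 0)"
  using assms paths_to_iD[OF as]
  by (cases js rule: rev_cases) (auto simp: path_tensor_def fun_eq_iff hd_append neq_Nil_conv)

text \<open>\<open>y \<otimes> \<dots> \<otimes> z\<close> lies in \<open>\<Lambda> e\<close> when \<open>z = c e\<close>: it is \<open>(y \<otimes> \<dots> \<otimes> c) e\<close>.\<close>

lemma path_tensor_in_proj:
  assumes y: "y \<in> vecs (d l)" and z: "z \<in> Ae"
  shows "path_tensor as t y z \<in> \<Lambda>e"
proof -
  obtain c where c: "c \<in> vecs (d i)" "z = mul i c e" using z unfolding left_ideal_def by blast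
  note fd_i = fd[OF i_in_V]
  have "path_tensor as t y z = pmul (path_tensor as t y c) (gincl d i e)"
  proof (intro ext, clarify)
    fix v bs js
    note R = pmul_gincl_right[OF i_in_V e_in_vecs path_tensor_in_Lambda[OF y c(1)], of v bs js]
    show "path_tensor as t y z (v, bs, js) = pmul (path_tensor as t y c) (gincl d i e) (v, bs, js)"
    proof (cases "(v, bs, js) \<in> W")
      case w: True
      let ?cond = "v = l \<and> bs = as \<and> length js = Suc (length as) \<and> tl (butlast js) = t"
      have sl: "(\<lambda>p. path_tensor as t y c (v, bs, butlast js @ [p])) = (if ?cond then sc (y (hd js)) c else 0)"
        using words_indices_nonempty[OF w] by (rule path_tensor_last_slice)
      show ?thesis
      proof (cases ?cond)
        case True
        then have "pend tgt v bs = i" using paths_to_iD[OF as] by simp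
        have "path_tensor as t y z (v, bs, js) = y (hd js) * z (last js)"
          using True by (simp add: path_tensor_def)
        also have "\<dots> = mul i (sc (y (hd js)) c) e (last js)"
          using fd_alg_sc_left[OF fd_i c(1) e_in_vecs] c(2) by simp
        also have "\<dots> = pmul (path_tensor as t y c) (gincl d i e) (v, bs, js)"
          unfolding R sl using w True \<open>pend tgt v bs = i\<close> by simp
        finally show ?thesis .
      next
        case False
        then have "path_tensor as t y z (v, bs, js) = 0" by (auto simp: path_tensor_def)
        moreover have "pmul (path_tensor as t y c) (gincl d i e) (v, bs, js) = 0"
          unfolding R sl using False fd_alg_zero_left[OF fd_i e_in_vecs] by auto
        ultimately show ?thesis by simp
      qed
    next
      case False
      then show ?thesis
        using R path_tensor_support(1)[OF y Ae_subset_vecs[THEN subsetD, OF z]] by auto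
    qed
  qed
  then show ?thesis using path_tensor_in_Lambda[OF y c(1)] unfolding gpa_proj_def by blast
qed

lemma pmul_gincl_path_tensor:
  assumes y: "y \<in> vecs (d l)" and z: "z \<in> vecs (d i)" and a: "a \<in> vecs (d l)"
  shows "pmul (gincl d l a) (path_tensor as t y z) = path_tensor as t (mul l a y) z"
proof (intro ext, clarify)
  fix v bs js
  note fd_l = fd[OF l_in_V]
  note L = pmul_gincl_left[OF l_in_V a path_tensor_in_Lambda[OF y z], of v bs js]
  have my: "mul l a y \<in> vecs (d l)" using fd_alg_closed[OF fd_l a y] .
  show "pmul (gincl d l a) (path_tensor as t y z) (v, bs, js) = path_tensor as t (mul l a y) z (v, bs, js)"
  proof (cases "(v, bs, js) \<in> W \<and> v = l")
    case True
    let ?cond = "bs = as \<and> length js = Suc (length as) \<and> tl (butlast js) = t"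
    have sl: "(\<lambda>q. path_tensor as t y z (l, bs, q # tl js)) = (if ?cond then sc (z (last js)) y else 0)"
      using True words_indices_nonempty by (blast intro: path_tensor_first_slice)
    have "pmul (gincl d l a) (path_tensor as t y z) (v, bs, js) =
        (if ?cond then z (last js) * mul l a y (hd js) else 0)"
      unfolding L sl using True fd_alg_sc_right[OF fd_l a y] fd_alg_zero_right[OF fd_l a] by auto
    then show ?thesis using True by (simp add: path_tensor_def mult.commute)
  next
    case False
    then show ?thesis using L path_tensor_support(1,2)[OF my z, of v bs js] by auto
  qed
qed

end

lemma summand_emb_in_proj: "b \<in> summands \<Longrightarrow> y \<in> vecs (d l) \<Longrightarrow> summand_emb b y \<in> \<Lambda>e"
  by (auto elim!: summandsE simp: summand_emb_def path_tensor_in_proj basis_in_Ae)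

lemma pmul_gincl_summand_emb:
  "b \<in> summands \<Longrightarrow> y \<in> vecs (d l) \<Longrightarrow> a \<in> vecs (d l) \<Longrightarrow>
    pmul (gincl d l a) (summand_emb b y) = summand_emb b (mul l a y)"
  by (auto elim!: summandsE simp: summand_emb_def pmul_gincl_path_tensor basis_in_vecs)

lemma summand_emb_add: "summand_emb b (y + y') = summand_emb b y + summand_emb b y'"
  and summand_emb_sc: "summand_emb b (sc c y) = sc c (summand_emb b y)"
  by (auto simp: summand_emb_def path_tensor_def fun_eq_iff algebra_simps split: prod.splits)

lemma sum_basis: "sum f (set bl) = (\<Sum>k<length bl. f (bl ! k))"
proof -
  have "set bl = (!) bl ` {..<length bl}" by (auto simp: in_set_conv_nth)
  moreover have "inj_on ((!) bl) {..<length bl}" using inj_on_nth[OF distinct_bl] by simp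
  ultimately show ?thesis by (simp add: sum.reindex)
qed

lemma slice_in_span_basis:
  assumes x: "x \<in> \<Lambda>e" and as: "as \<in> paths_to_i" and t: "t \<in> inner_indices as" and q: "q < d l"
  shows "(\<lambda>r. x (l, as, q # t @ [r])) \<in> fv.span (set bl)"
proof (cases "d i = 0")
  case True
  then have "(\<lambda>r. x (l, as, q # t @ [r])) = 0"
    using proj_support[OF x] word_from_lD(5) by (fastforce simp: fun_eq_iff)
  then show ?thesis using fv.span_zero by simp
next
  case False
  then have "(l, as, (q # t) @ [0]) \<in> W" using word_from_l[OF as t q] by simp
  then show ?thesis
    using proj_last_slice_in_Ae[OF x, of l as "q # t" 0] paths_to_iD[OF as] span_bl by simp
qed

lemma summand_coord_vecs: "summand_coord b x \<in> vecs (d l)"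
  by (cases b) (auto simp: summand_coord_def vecs_def)

lemma summand_coord_add:
  assumes b: "b \<in> summands" and x: "x \<in> \<Lambda>e" "x' \<in> \<Lambda>e"
  shows "summand_coord b (x + x') = summand_coord b x + summand_coord b x'"
proof
  fix q
  obtain as t k where bd: "b = (as, t, k)" "as \<in> paths_to_i" "t \<in> inner_indices as" "k < length bl"
    using b by (rule summandsE)
  show "summand_coord b (x + x') q = (summand_coord b x + summand_coord b x') q"
  proof (cases "q < d l")
    case True
    have "(\<lambda>r. (x + x') (l, as, q # t @ [r])) = (\<lambda>r. x (l, as, q # t @ [r])) + (\<lambda>r. x' (l, as, q # t @ [r]))"
      by (rule ext) simp
    then show ?thesis
      using fv.representation_add[OF independent_bl slice_in_span_basis[OF x(2) bd(2,3) True]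
          slice_in_span_basis[OF x(1) bd(2,3) True]] True bd(1)
      by (simp add: summand_coord_def)
  qed (simp add: bd(1) summand_coord_def)
qed

lemma summand_coord_sc:
  assumes b: "b \<in> summands" and x: "x \<in> \<Lambda>e"
  shows "summand_coord b (sc c x) = sc c (summand_coord b x)"
proof
  fix q
  obtain as t k where bd: "b = (as, t, k)" "as \<in> paths_to_i" "t \<in> inner_indices as" "k < length bl"
    using b by (rule summandsE)
  show "summand_coord b (sc c x) q = sc c (summand_coord b x) q"
  proof (cases "q < d l")
    case True
    have "(\<lambda>r. (sc c x) (l, as, q # t @ [r])) = sc c (\<lambda>r. x (l, as, q # t @ [r]))"
      by (rule ext) simp
    then show ?thesis
      using fv.representation_scale[OF independent_bl slice_in_span_basis[OF x bd(2,3) True]] True bd(1)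
      by (simp add: summand_coord_def)
  qed (simp add: bd(1) summand_coord_def)
qed

lemma summand_coord_emb:
  assumes b: "b \<in> summands" and b': "b' \<in> summands" and y: "y \<in> vecs (d l)"
  shows "summand_coord b' (summand_emb b y) = (if b' = b then y else 0)"
proof -
  obtain as t k where bd: "b = (as, t, k)" "as \<in> paths_to_i" "t \<in> inner_indices as" "k < length bl"
    using b by (rule summandsE)
  obtain as' t' k' where bd': "b' = (as', t', k')" "as' \<in> paths_to_i" "t' \<in> inner_indices as'" "k' < length bl"
    using b' by (rule summandsE)
  have rep: "fv.representation (set bl) (sc c (bl ! k)) (bl ! k') = (if k' = k then c else 0)" for c
    using fv.representation_scale[OF independent_bl fv.span_base] fv.representation_basis[OF independent_bl]
      bd(4) bd'(4) nth_eq_iff_index_eq[OF distinct_bl] by auto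
  show ?thesis
  proof
    fix q
    have "(\<lambda>r. summand_emb b y (l, as', q # t' @ [r])) = (if as' = as \<and> t' = t then sc (y q) (bl ! k) else 0)"
      using path_tensor_slice[OF bd(2,3) bd'(2,3)] by (simp add: bd(1) summand_emb_def)
    then show "summand_coord b' (summand_emb b y) q = (if b' = b then y else 0) q"
      using y bd bd' rep by (auto simp: summand_coord_def vecs_def fv.representation_zero)
  qed
qed

lemma summand_emb_support:
  assumes b: "b \<in> summands" and y: "y \<in> vecs (d l)" and nz: "summand_emb b y (v, bs, js) \<noteq> 0"
  shows "v = l \<and> (v, bs, js) \<in> W \<and> pend tgt v bs = i \<and> (\<exists>k. b = (bs, tl (butlast js), k))"
proof -
  obtain as t k where bd: "b = (as, t, k)" "as \<in> paths_to_i" "t \<in> inner_indices as" "k < length bl"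
    using b by (rule summandsE)
  then have "path_tensor as t y (bl ! k) (v, bs, js) \<noteq> 0" using nz by (simp add: summand_emb_def)
  note supp = path_tensor_support[OF bd(2,3) y basis_in_vecs[OF bd(4)] this]
  moreover have "pend tgt l as = i" using paths_to_iD[OF bd(2)] by blast
  ultimately show ?thesis using bd(1) by auto
qed

lemma sum_summands_at_word:
  assumes x: "x \<in> \<Lambda>e" and w: "(l, bs, js) \<in> W" and p: "pend tgt l bs = i"
  shows "(\<Sum>b\<in>summands. summand_emb b (summand_coord b x) (l, bs, js)) = x (l, bs, js)"
proof -
  let ?t = "tl (butlast js)" and ?sl = "\<lambda>r. x (l, bs, hd js # tl (butlast js) @ [r])"
  note js = word_from_lD[OF w p]
  have sl: "?sl \<in> fv.span (set bl)" using slice_in_span_basis[OF x js(1,2,4)] .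
  have "(\<Sum>b\<in>summands. summand_emb b (summand_coord b x) (l, bs, js)) =
      (\<Sum>k<length bl. summand_emb (bs, ?t, k) (summand_coord (bs, ?t, k) x) (l, bs, js))"
  proof (rule sum_over_image_support[OF finite_summands])
    show "(\<lambda>k. (bs, ?t, k)) ` {..<length bl} \<subseteq> summands" using js(1,2) by (auto simp: summands_def)
    fix b assume b: "b \<in> summands" "b \<notin> (\<lambda>k. (bs, ?t, k)) ` {..<length bl}"
    show "summand_emb b (summand_coord b x) (l, bs, js) = 0"
    proof (rule ccontr)
      assume "summand_emb b (summand_coord b x) (l, bs, js) \<noteq> 0"
      then obtain k where "b = (bs, ?t, k)" using summand_emb_support[OF b(1) summand_coord_vecs] by blast
      then show False using b by (auto simp: summands_def)
    qed
  qed (auto simp: inj_on_def)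
  also have "\<dots> = (\<Sum>k<length bl. fv.representation (set bl) ?sl (bl ! k) * (bl ! k) (last js))"
    using wordsD(2)[OF w] js(4) by (intro sum.cong) (simp_all add: summand_emb_def path_tensor_def summand_coord_def)
  also have "\<dots> = (\<Sum>b\<in>set bl. sc (fv.representation (set bl) ?sl b) b) (last js)"
    by (simp add: sum_fun_apply sum_basis)
  also have "\<dots> = ?sl (last js)"
    using fv.sum_representation_eq[OF independent_bl sl, of "set bl"] by simp
  also have "\<dots> = x (l, bs, js)" using js(3) by simp
  finally show ?thesis .
qed

lemma restr_decomp:
  assumes x: "x \<in> \<Lambda>e" shows "restr l x = (\<Sum>b\<in>summands. summand_emb b (summand_coord b x))"
proof (intro ext, clarify)
  fix v bs js
  show "restr l x (v, bs, js) = (\<Sum>b\<in>summands. summand_emb b (summand_coord b x)) (v, bs, js)"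
  proof (cases "v = l \<and> (v, bs, js) \<in> W \<and> pend tgt v bs = i")
    case True
    then show ?thesis
      using pmul_unit_left[OF l_in_V proj_in_Lambda[OF x]] sum_summands_at_word[OF x]
      by (auto simp: sum_fun_apply)
  next
    case False
    then have "summand_emb b (summand_coord b x) (v, bs, js) = 0" if "b \<in> summands" for b
      using summand_emb_support[OF that summand_coord_vecs] by blast
    moreover have "x (v, bs, js) = 0" if "v = l" using proj_support[OF x] False that by blast
    ultimately show ?thesis
      using pmul_unit_left[OF l_in_V proj_in_Lambda[OF x]] by (simp add: sum_fun_apply)
  qed
qed

theorem rep_space_off_vertex_iso:
  "rmod_iso (vecs (d l)) (rep_space V E src tgt d mul one i e l) (rep_act V E src tgt d mul i e l) sc
     (dpow (d l) (card summands)) (dpow_act (d l) (card summands) (mul l)) dpow_sc"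
proof -
  obtain h where h: "bij_betw h {..<card summands} summands"
    using ex_bij_betw_nat_finite[OF finite_summands] by (auto simp: atLeast0LessThan)
  then have h_in: "m < card summands \<Longrightarrow> h m \<in> summands" for m by (auto simp: bij_betw_def)
  interpret bd: block_decomposition \<Lambda>e "vecs (d l)" "card summands"
    "\<lambda>m. summand_emb (h m)" "\<lambda>m. summand_coord (h m)" "restr l"
  proof unfold_locales
    fix m m' and y :: "nat \<Rightarrow> 'k" assume "m < card summands" "m' < card summands" "y \<in> vecs (d l)"
    then show "summand_coord (h m') (summand_emb (h m) y) = (if m' = m then y else 0)"
      using summand_coord_emb[OF h_in h_in] h by (auto simp: bij_betw_def inj_on_def)
  next
    fix x assume "x \<in> \<Lambda>e"
    then show "restr l x = (\<Sum>m<card summands. summand_emb (h m) (summand_coord (h m) x))"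
      using restr_decomp sum.reindex_bij_betw[OF h, of "\<lambda>b. summand_emb b (summand_coord b x)"] by simp
  qed (use proj_subspace vecs_subspace h_in summand_emb_in_proj summand_emb_add summand_emb_sc
      summand_coord_vecs summand_coord_add summand_coord_sc in blast)+
  have "rmod_iso (vecs (d l)) (bd.restr_dual ` dual \<Lambda>e) (dact \<Lambda>e (\<lambda>a. pmul (gincl d l a))) sc
      (dual_pow (vecs (d l)) (card summands)) (dual_pow_act (vecs (d l)) (card summands) (mul l)) dpow_sc"
    by (intro bd.rmod_iso_dual_pow) (use h_in pmul_gincl_summand_emb fd_alg_closed[OF fd[OF l_in_V]] in blast)+
  then show ?thesis
    unfolding rep_space_eq rep_act_eq bd.restr_dual_def[abs_def] dpow_eq_dual_pow dpow_act_eq_dual_pow_act .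
qed

end


theorem proposition5p7:
  fixes V E :: "nat set" and src tgt :: "nat \<Rightarrow> nat" and d :: "nat \<Rightarrow> nat"
    and mul :: "nat \<Rightarrow> (nat \<Rightarrow> 'k::field) \<Rightarrow> (nat \<Rightarrow> 'k) \<Rightarrow> (nat \<Rightarrow> 'k)"
    and one :: "nat \<Rightarrow> (nat \<Rightarrow> 'k)"
    and s :: "nat \<Rightarrow> nat" and e :: "nat \<Rightarrow> nat \<Rightarrow> (nat \<Rightarrow> 'k)"
    and i j :: nat
  assumes "alg_closed TYPE('k)"
    and "quiver V E src tgt" and "acyclic_quiver V E src tgt"
    and "\<forall>v\<in>V. fd_alg (d v) (mul v) (one v)"
    and "\<forall>v\<in>V. complete_prim_orth (d v) (mul v) (one v) (s v) (e v)"
    and "\<forall>v\<in>V. basic_alg (d v) (mul v) (s v) (e v)"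
    and "i \<in> V" and "1 \<le> j" and "j \<le> s i"
  shows "rmod_iso (vecs (d i))
           (rep_space V E src tgt d mul one i (e i j) i) (rep_act V E src tgt d mul i (e i j) i) sc
           (dual (left_ideal (d i) (mul i) (e i j))) (dact (left_ideal (d i) (mul i) (e i j)) (mul i)) sc
       \<and> (\<forall>l\<in>V. l \<noteq> i \<longrightarrow>
           rmod_iso (vecs (d l))
             (rep_space V E src tgt d mul one i (e i j) l) (rep_act V E src tgt d mul i (e i j) l) sc
             (dpow (d l) (nmult V E src tgt d (dimk (dual (left_ideal (d i) (mul i) (e i j)))) l i))
             (dpow_act (d l) (nmult V E src tgt d (dimk (dual (left_ideal (d i) (mul i) (e i j)))) l i) (mul l))
             dpow_sc)
       \<and> (\<forall>l\<in>V. l \<noteq> i \<and> \<not> (\<exists>as. qpath V E src tgt l as \<and> pend tgt l as = i) \<longrightarrow>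
           rep_space V E src tgt d mul one i (e i j) l = {0})"
proof -
  have "e i j \<in> vecs (d i)"
    using assms(5,7,8,9) by (auto simp: complete_prim_orth_def prim_idem_def idem_def)
  then interpret indec_injective V E src tgt d mul one i "e i j"
    by unfold_locales (use assms(2,3,4,7) in auto)
  obtain B where B: "finite B" "fv.independent B" "fv.span B = Ae"
    using subspace_of_vecs_has_finite_basis[OF Ae_subspace Ae_subset_vecs] by blast
  obtain bl where bl: "set bl = B" "distinct bl" using finite_distinct_list[OF B(1)] by blast
  have dim: "dimk (dual Ae) = length bl"
    using dimk_dual_eq_card[OF Ae_subspace B] bl distinct_card by metis
  have "rmod_iso (vecs (d l)) (rep_space V E src tgt d mul one i (e i j) l) (rep_act V E src tgt d mul i (e i j) l) sc
      (dpow (d l) (nmult V E src tgt d (dimk (dual Ae)) l i))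
      (dpow_act (d l) (nmult V E src tgt d (dimk (dual Ae)) l i) (mul l)) dpow_sc"
    if "l \<in> V" "l \<noteq> i" for l
  proof -
    interpret indec_injective_off V E src tgt d mul one i "e i j" l bl
      by unfold_locales (use that bl B in auto)
    show ?thesis using rep_space_off_vertex_iso card_summands dim by simp
  qed
  then show ?thesis using rep_space_at_vertex_iso rep_space_trivial_without_path by blast
qed

end
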